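(* Let $\mathfrak g$ be a finite-dimensional Lie algebra over a field $\mathbb K$ of characteristic zero having an ideal $\mathfrak h_m$ isomorphic to the Heisenberg algebra of dimension $2m+1$, such that the center of $\mathfrak g$ coincides with the center of $\mathfrak h_m$. Let $\mathcal A$ be a commutative subalgebra of $\operatorname{Ann}(\mathfrak h_m)$ complete in $\operatorname{Ann}(\mathfrak h_m)$, and $\mathcal B$ a complete commutative subalgebra of $S(\mathfrak h_m)$. Then $\mathcal A+\mathcal B$ is complete in $S(\mathfrak g)$.
   Context: The Heisenberg algebra $\mathfrak h_m$ is $V\oplus\mathbb K e$ with $\dim V=2m$, $e$ central and $[\xi_1,\xi_2]=\omega(\xi_1,\xi_2)e$ for $\xi_i\in V$, $\omega$ a symplectic form on $V$. $S(\mathfrak g)$ is the polynomial algebra on $\mathfrak g^*$ with Lie–Poisson bracket $\{f,g\}(x)=\langle x,[df(x),dg(x)]\rangle$; $S(\mathfrak h_m)\subset S(\mathfrak g)$. $\Phi_x(\xi,\eta)=\langle x,[\xi,\eta]\rangle$. $\operatorname{Ann}(\mathfrak h_m)=\{f\in S(\mathfrak g)\mid\{f,\eta\}=0\ \forall\eta\in\mathfrak h_m\}$. For a subalgebra $\mathcal F$, $d\mathcal F(x)$ is the span of the differentials of its elements at $x$; a commutative $\mathcal A\subset\mathcal F$ is complete in $\mathcal F$ if $d\mathcal A(x)$ is maximal $\Phi_x$-isotropic in $d\mathcal F(x)$ for generic $x\in\mathfrak g^*$. A commutative subalgebra of $S(\mathfrak l)$ is complete if its transcendence degree is $\frac12(\dim\mathfrak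 l+\operatorname{ind}\mathfrak l)$ (index = generic corank of $\Phi_x$), equivalently complete in $S(\mathfrak l)$ in the previous sense. $\mathcal A+\mathcal B$ is the smallest Poisson subalgebra containing both. *)

theory Defs
  imports Main "HOL-Library.Poly_Mapping" "HOL-Library.Function_Algebras"
begin

text \<open>The Lie algebra g has a basis indexed by a finite type 'n. Elements of g (and
of g*, via the dual basis) are functions 'n => 'k. The Lie bracket is given by
structure constants c i j k: [e_i, e_j] = sum_k c i j k e_k.\<close>

type_synonym ('n, 'k) vec = "'n \<Rightarrow> 'k"

definition vscale :: "'k::field \<Rightarrow> ('n, 'k) vec \<Rightarrow> ('n, 'k) vec" where
  "vscale a v = (\<lambda>i. a * v i)"

definition kspan :: "('n, 'k::field) vec set \<Rightarrow> ('n, 'k) vec set" where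
  "kspan X = {v. \<exists>S a. finite S \<and> S \<subseteq> X \<and> v = (\<lambda>i. \<Sum>u\<in>S. a u * u i)}"

definition is_subspace :: "('n, 'k::field) vec set \<Rightarrow> bool" where
  "is_subspace U \<longleftrightarrow> 0 \<in> U \<and> (\<forall>u\<in>U. \<forall>v\<in>U. u + v \<in> U) \<and> (\<forall>a. \<forall>u\<in>U. vscale a u \<in> U)"

definition lin_indep :: "('n, 'k::field) vec set \<Rightarrow> bool" where
  "lin_indep B \<longleftrightarrow> (\<forall>a. (\<lambda>i. \<Sum>u\<in>B. a u * u i) = 0 \<longrightarrow> (\<forall>u\<in>B. a u = 0))"

definition has_dim :: "('n, 'k::field) vec set \<Rightarrow> nat \<Rightarrow> bool" where
  "has_dim U d \<longleftrightarrow> (\<exists>B. finite B \<and> card B = d \<and> lin_indep B \<and> kspan B = U)"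

definition bracket :: "('n::finite \<Rightarrow> 'n \<Rightarrow> 'n \<Rightarrow> 'k::field) \<Rightarrow> ('n, 'k) vec \<Rightarrow> ('n, 'k) vec \<Rightarrow> ('n, 'k) vec" where
  "bracket c \<xi> \<eta> = (\<lambda>k. \<Sum>i\<in>UNIV. \<Sum>j\<in>UNIV. c i j k * \<xi> i * \<eta> j)"

definition is_lie_algebra :: "('n::finite \<Rightarrow> 'n \<Rightarrow> 'n \<Rightarrow> 'k::field) \<Rightarrow> bool" where
  "is_lie_algebra c \<longleftrightarrow>
     (\<forall>\<xi>. bracket c \<xi> \<xi> = 0) \<and>
     (\<forall>\<xi> \<eta> \<zeta>. bracket c (bracket c \<xi> \<eta>) \<zeta> + bracket c (bracket c \<eta> \<zeta>) \<xi>
                 + bracket c (bracket c \<zeta> \<xi>) \<eta> = 0)"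

definition is_ideal :: "('n::finite \<Rightarrow> 'n \<Rightarrow> 'n \<Rightarrow> 'k::field) \<Rightarrow> ('n, 'k) vec set \<Rightarrow> bool" where
  "is_ideal c h \<longleftrightarrow> is_subspace h \<and> (\<forall>\<xi>\<in>h. \<forall>\<eta>. bracket c \<xi> \<eta> \<in> h)"

definition center :: "('n::finite \<Rightarrow> 'n \<Rightarrow> 'n \<Rightarrow> 'k::field) \<Rightarrow> ('n, 'k) vec set \<Rightarrow> ('n, 'k) vec set" where
  "center c h = {z \<in> h. \<forall>y\<in>h. bracket c z y = 0}"

definition symplectic_on :: "('n, 'k::field) vec set \<Rightarrow> (('n, 'k) vec \<Rightarrow> ('n, 'k) vec \<Rightarrow> 'k) \<Rightarrow> bool" where
  "symplectic_on V \<omega> \<longleftrightarrow>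
     (\<forall>u\<in>V. \<forall>v\<in>V. \<forall>w\<in>V. \<forall>a b. \<omega> (vscale a u + vscale b v) w = a * \<omega> u w + b * \<omega> v w
                              \<and> \<omega> w (vscale a u + vscale b v) = a * \<omega> w u + b * \<omega> w v) \<and>
     (\<forall>u\<in>V. \<omega> u u = 0) \<and>
     (\<forall>u\<in>V. (\<forall>v\<in>V. \<omega> u v = 0) \<longrightarrow> u = 0)"

definition is_heisenberg :: "('n::finite \<Rightarrow> 'n \<Rightarrow> 'n \<Rightarrow> 'k::field) \<Rightarrow> ('n, 'k) vec set \<Rightarrow> nat \<Rightarrow> bool" where
  "is_heisenberg c h m \<longleftrightarrow>
     (\<exists>V e \<omega>. is_subspace V \<and> has_dim V (2 * m) \<and> e \<noteq> 0 \<and> e \<notin> V \<and>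
        h = {v + vscale a e | v a. v \<in> V} \<and>
        (\<forall>\<xi>\<in>h. bracket c e \<xi> = 0 \<and> bracket c \<xi> e = 0) \<and>
        symplectic_on V \<omega> \<and>
        (\<forall>\<xi>1\<in>V. \<forall>\<xi>2\<in>V. bracket c \<xi>1 \<xi>2 = vscale (\<omega> \<xi>1 \<xi>2) e))"

text \<open>Polynomials in the variables X_i (= basis vector e_i as a linear function on g*).\<close>
type_synonym ('n, 'k) poly = "('n \<Rightarrow>\<^sub>0 nat) \<Rightarrow>\<^sub>0 'k"

definition pconst :: "'k::field \<Rightarrow> ('n, 'k) poly" where
  "pconst a = Poly_Mapping.single 0 a"

definition pvar :: "'n \<Rightarrow> ('n, 'k::field) poly" where
  "pvar i = Poly_Mapping.single (Poly_Mapping.single i 1) 1"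

definition plin :: "('n::finite, 'k::field) vec \<Rightarrow> ('n, 'k) poly" where
  "plin \<xi> = (\<Sum>i\<in>UNIV. pconst (\<xi> i) * pvar i)"

definition peval :: "('n, 'k::field) poly \<Rightarrow> ('n, 'k) vec \<Rightarrow> 'k" where
  "peval f x = (\<Sum>m\<in>Poly_Mapping.keys f.
      Poly_Mapping.lookup f m * (\<Prod>i\<in>Poly_Mapping.keys m. x i ^ Poly_Mapping.lookup m i))"

definition pderiv_var :: "'n \<Rightarrow> ('n, 'k::field) poly \<Rightarrow> ('n, 'k) poly" where
  "pderiv_var i f = (\<Sum>m\<in>Poly_Mapping.keys f.
      Poly_Mapping.single (m - Poly_Mapping.single i 1)
        (of_nat (Poly_Mapping.lookup m i) * Poly_Mapping.lookup f m))"

definition pdiff :: "('n, 'k::field) poly \<Rightarrow> ('n, 'k) vec \<Rightarrow> ('n, 'k) vec" where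
  "pdiff f x = (\<lambda>i. peval (pderiv_var i f) x)"

text \<open>Lie-Poisson bracket: {f,g}(x) = <x, [df(x), dg(x)]>.\<close>
definition pbracket :: "('n::finite \<Rightarrow> 'n \<Rightarrow> 'n \<Rightarrow> 'k::field) \<Rightarrow> ('n, 'k) poly \<Rightarrow> ('n, 'k) poly \<Rightarrow> ('n, 'k) poly" where
  "pbracket c f g = (\<Sum>i\<in>UNIV. \<Sum>j\<in>UNIV. \<Sum>k\<in>UNIV.
      pconst (c i j k) * pvar k * pderiv_var i f * pderiv_var j g)"

definition Phi :: "('n::finite \<Rightarrow> 'n \<Rightarrow> 'n \<Rightarrow> 'k::field) \<Rightarrow> ('n, 'k) vec \<Rightarrow> ('n, 'k) vec \<Rightarrow> ('n, 'k) vec \<Rightarrow> 'k" where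
  "Phi c x \<xi> \<eta> = (\<Sum>k\<in>UNIV. x k * bracket c \<xi> \<eta> k)"

definition is_subalgebra :: "('n, 'k::field) poly set \<Rightarrow> bool" where
  "is_subalgebra A \<longleftrightarrow> (\<forall>a. pconst a \<in> A) \<and> (\<forall>f\<in>A. \<forall>g\<in>A. f + g \<in> A \<and> f * g \<in> A)"

definition poisson_commutative :: "('n::finite \<Rightarrow> 'n \<Rightarrow> 'n \<Rightarrow> 'k::field) \<Rightarrow> ('n, 'k) poly set \<Rightarrow> bool" where
  "poisson_commutative c A \<longleftrightarrow> (\<forall>f\<in>A. \<forall>g\<in>A. pbracket c f g = 0)"

inductive_set alg_gen :: "('n, 'k::field) poly set \<Rightarrow> ('n, 'k) poly set" for G where
  const: "pconst a \<in> alg_gen G"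
| gen: "f \<in> G \<Longrightarrow> f \<in> alg_gen G"
| add: "f \<in> alg_gen G \<Longrightarrow> g \<in> alg_gen G \<Longrightarrow> f + g \<in> alg_gen G"
| mult: "f \<in> alg_gen G \<Longrightarrow> g \<in> alg_gen G \<Longrightarrow> f * g \<in> alg_gen G"

text \<open>S(h) as a subalgebra of S(g): generated by the elements of h.\<close>
definition Sym :: "('n::finite, 'k::field) vec set \<Rightarrow> ('n, 'k) poly set" where
  "Sym h = alg_gen (plin ` h)"

text \<open>Smallest Poisson subalgebra containing G (A + B is poisson_gen c (A \<union> B)).\<close>
inductive_set poisson_gen :: "('n::finite \<Rightarrow> 'n \<Rightarrow> 'n \<Rightarrow> 'k::field) \<Rightarrow> ('n, 'k) poly set \<Rightarrow> ('n, 'k) poly set"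
  for c G where
  const: "pconst a \<in> poisson_gen c G"
| gen: "f \<in> G \<Longrightarrow> f \<in> poisson_gen c G"
| add: "f \<in> poisson_gen c G \<Longrightarrow> g \<in> poisson_gen c G \<Longrightarrow> f + g \<in> poisson_gen c G"
| mult: "f \<in> poisson_gen c G \<Longrightarrow> g \<in> poisson_gen c G \<Longrightarrow> f * g \<in> poisson_gen c G"
| br: "f \<in> poisson_gen c G \<Longrightarrow> g \<in> poisson_gen c G \<Longrightarrow> pbracket c f g \<in> poisson_gen c G"

definition Ann :: "('n::finite \<Rightarrow> 'n \<Rightarrow> 'n \<Rightarrow> 'k::field) \<Rightarrow> ('n, 'k) vec set \<Rightarrow> ('n, 'k) poly set" where
  "Ann c h = {f. \<forall>\<eta>\<in>h. pbracket c f (plin \<eta>) = 0}"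

definition dspan :: "('n, 'k::field) poly set \<Rightarrow> ('n, 'k) vec \<Rightarrow> ('n, 'k) vec set" where
  "dspan F x = kspan ((\<lambda>f. pdiff f x) ` F)"

definition isotropic :: "('n::finite \<Rightarrow> 'n \<Rightarrow> 'n \<Rightarrow> 'k::field) \<Rightarrow> ('n, 'k) vec \<Rightarrow> ('n, 'k) vec set \<Rightarrow> bool" where
  "isotropic c x U \<longleftrightarrow> (\<forall>u\<in>U. \<forall>v\<in>U. Phi c x u v = 0)"

definition max_isotropic_in :: "('n::finite \<Rightarrow> 'n \<Rightarrow> 'n \<Rightarrow> 'k::field) \<Rightarrow> ('n, 'k) vec \<Rightarrow> ('n, 'k) vec set \<Rightarrow> ('n, 'k) vec set \<Rightarrow> bool" where
  "max_isotropic_in c x U W \<longleftrightarrow> is_subspace U \<and> U \<subseteq> W \<and> isotropic c x U \<and>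
     (\<forall>U'. is_subspace U' \<and> U \<subseteq> U' \<and> U' \<subseteq> W \<and> isotropic c x U' \<longrightarrow> U' = U)"

text \<open>A property holds for generic x in g*: on the complement of the zero set of a
nonzero polynomial (a nonempty Zariski-open set).\<close>
definition generically :: "(('n, 'k::field) vec \<Rightarrow> bool) \<Rightarrow> bool" where
  "generically P \<longleftrightarrow> (\<exists>p :: ('n, 'k) poly. p \<noteq> 0 \<and> (\<forall>x. peval p x \<noteq> 0 \<longrightarrow> P x))"

definition complete_in :: "('n::finite \<Rightarrow> 'n \<Rightarrow> 'n \<Rightarrow> 'k::field) \<Rightarrow> ('n, 'k) poly set \<Rightarrow> ('n, 'k) poly set \<Rightarrow> bool" where
  "complete_in c A F \<longleftrightarrow> generically (\<lambda>x. max_isotropic_in c x (dspan A x) (dspan F x))"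

end

theory Submission
  imports Defs "HOL.Vector_Spaces"
begin

text \<open>Fix a point \<open>x\<close> with \<open>\<langle>x, e\<rangle> \<noteq> 0\<close>, where \<open>e\<close> spans the centre, and write
  \<open>[\<xi>, v] = D\<^sub>\<xi> v + \<lambda>\<^sub>\<xi>(v) e\<close> for \<open>v \<in> V\<close>. Every \<open>\<xi> \<in> g\<close> lifts to
  \<open>F\<^sub>\<xi> = e \<xi> - 1/2 \<Sum>\<^sub>k D\<^sub>\<xi>(k) k\<^sup>* - e u\<^sub>\<xi> \<in> Ann(h)\<close>, with \<open>k\<^sup>*\<close> the
  \<open>\<omega>\<close>-dual basis and \<open>u\<^sub>\<xi>\<close> representing \<open>\<lambda>\<^sub>\<xi>\<close>; its differential at \<open>x\<close> is
  \<open>\<langle>x, e\<rangle> \<xi>\<close> modulo \<open>h\<close>. Hence every covector \<open>\<Phi>\<^sub>x\<close>-orthogonal to \<open>h\<close> lies in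
  \<open>dAnn(h)(x)\<close>. Since \<open>A \<subseteq> Ann(h)\<close> and \<open>B \<subseteq> S(h)\<close> Poisson-commute, the differentials of
  \<open>A + B\<close> span the isotropic space \<open>dA(x) + dB(x)\<close>. If \<open>u\<close> is orthogonal to it, split
  \<open>u = v + w\<close> with \<open>v \<in> V\<close> representing \<open>\<Phi>\<^sub>x(u, -)\<close> on \<open>V\<close>, so that \<open>w\<close> is orthogonal to
  \<open>h\<close>. Maximality of \<open>dB(x)\<close> in \<open>h = dS(h)(x)\<close> puts \<open>v\<close> into \<open>dB(x)\<close>, and maximality of
  \<open>dA(x)\<close> in \<open>dAnn(h)(x)\<close> puts \<open>w\<close> into \<open>dA(x)\<close>.\<close>

section \<open>Polynomial calculus\<close>

lemma additive_sum:
  fixes F :: "'a::comm_monoid_add \<Rightarrow> 'b::comm_monoid_add"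
  assumes "\<And>a b. F (a + b) = F a + F b" "F 0 = 0"
  shows "F (\<Sum>i\<in>I. f i) = (\<Sum>i\<in>I. F (f i))"
  by (induction I rule: infinite_finite_induct) (auto simp: assms)

abbreviation eval_monomial :: "('n::finite, 'k::field) vec \<Rightarrow> ('n \<Rightarrow>\<^sub>0 nat) \<Rightarrow> 'k" where
  "eval_monomial x m \<equiv> (\<Prod>i\<in>UNIV. x i ^ Poly_Mapping.lookup m i)"

lemma poly_mapping_expand:
  "f = (\<Sum>m\<in>Poly_Mapping.keys f. Poly_Mapping.single m (Poly_Mapping.lookup f m))"
proof (rule poly_mapping_eqI)
  fix k
  have "Poly_Mapping.lookup (\<Sum>m\<in>Poly_Mapping.keys f. Poly_Mapping.single m (Poly_Mapping.lookup f m)) k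
     = (\<Sum>m\<in>Poly_Mapping.keys f. (if m = k then Poly_Mapping.lookup f m else 0))"
    by (simp add: lookup_sum lookup_single when_def eq_commute)
  also have "\<dots> = Poly_Mapping.lookup f k"
    by (simp add: sum.delta in_keys_iff)
  finally show "Poly_Mapping.lookup f k =
      Poly_Mapping.lookup (\<Sum>m\<in>Poly_Mapping.keys f. Poly_Mapping.single m (Poly_Mapping.lookup f m)) k"
    by simp
qed

lemma poly_mapping_mult_expand:
  "f * g = (\<Sum>m\<in>Poly_Mapping.keys f. \<Sum>n\<in>Poly_Mapping.keys g.
      Poly_Mapping.single m (Poly_Mapping.lookup f m) * Poly_Mapping.single n (Poly_Mapping.lookup g n))"
  by (subst poly_mapping_expand[of f], subst poly_mapping_expand[of g]) (simp add: sum_product)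

lemma peval_eq_sum:
  fixes f :: "('n::finite, 'k::field) poly"
  assumes "finite S" "Poly_Mapping.keys f \<subseteq> S"
  shows "peval f x = (\<Sum>m\<in>S. Poly_Mapping.lookup f m * eval_monomial x m)"
proof -
  have "peval f x = (\<Sum>m\<in>Poly_Mapping.keys f. Poly_Mapping.lookup f m * eval_monomial x m)"
    unfolding peval_def
    by (intro sum.cong refl arg_cong[where f="\<lambda>t. _ * t"] prod.mono_neutral_left)
       (auto simp: in_keys_iff)
  also have "\<dots> = (\<Sum>m\<in>S. Poly_Mapping.lookup f m * eval_monomial x m)"
    by (rule sum.mono_neutral_left) (use assms in \<open>auto simp: in_keys_iff\<close>)
  finally show ?thesis .
qed

lemma peval_add: "peval (f + g) x = peval f x + peval g x"
  for f g :: "('n::finite, 'k::field) poly"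
  using keys_add[of f g]
  by (simp add: peval_eq_sum[of "Poly_Mapping.keys f \<union> Poly_Mapping.keys g"]
      lookup_add distrib_right sum.distrib)

lemma peval_zero [simp]: "peval 0 x = 0"
  by (simp add: peval_def)

lemma peval_sum: "peval (\<Sum>i\<in>I. f i) x = (\<Sum>i\<in>I. peval (f i) x)"
  for f :: "_ \<Rightarrow> ('n::finite, 'k::field) poly"
  by (rule additive_sum) (simp_all add: peval_add)

lemma peval_single: "peval (Poly_Mapping.single m a) x = a * eval_monomial x m"
  for x :: "('n::finite, 'k::field) vec"
  by (subst peval_eq_sum[of "{m}"]) auto

lemma peval_mult: "peval (f * g) x = peval f x * peval g x"
  for f g :: "('n::finite, 'k::field) poly"
proof -
  have "peval (f * g) x = (\<Sum>m\<in>Poly_Mapping.keys f. \<Sum>n\<in>Poly_Mapping.keys g.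
      (Poly_Mapping.lookup f m * eval_monomial x m) * (Poly_Mapping.lookup g n * eval_monomial x n))"
    by (subst poly_mapping_mult_expand)
       (simp add: peval_sum mult_single peval_single lookup_add power_add prod.distrib mult_ac)
  also have "\<dots> = peval f x * peval g x"
    by (simp add: peval_eq_sum[OF finite_keys order_refl] sum_product mult_ac)
  finally show ?thesis .
qed

lemma pderiv_var_eq_sum:
  fixes f :: "('n, 'k::field) poly"
  assumes "finite S" "Poly_Mapping.keys f \<subseteq> S"
  shows "pderiv_var i f = (\<Sum>m\<in>S. Poly_Mapping.single (m - Poly_Mapping.single i 1)
        (of_nat (Poly_Mapping.lookup m i) * Poly_Mapping.lookup f m))"
  unfolding pderiv_var_def
  by (rule sum.mono_neutral_left) (use assms in \<open>auto simp: in_keys_iff\<close>)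

lemma pderiv_var_add: "pderiv_var i (f + g) = pderiv_var i f + pderiv_var i g"
  for f g :: "('n, 'k::field) poly"
  using keys_add[of f g]
  by (simp add: pderiv_var_eq_sum[of "Poly_Mapping.keys f \<union> Poly_Mapping.keys g"]
      lookup_add distrib_left sum.distrib single_add)

lemma pderiv_var_zero [simp]: "pderiv_var i 0 = 0"
  by (simp add: pderiv_var_def)

lemma pderiv_var_sum: "pderiv_var i (\<Sum>j\<in>I. f j) = (\<Sum>j\<in>I. pderiv_var i (f j))"
  for f :: "_ \<Rightarrow> ('n, 'k::field) poly"
  by (rule additive_sum) (simp_all add: pderiv_var_add)

lemma pderiv_var_uminus: "pderiv_var i (- f) = - pderiv_var i f"
  for f :: "('n, 'k::field) poly"
  using pderiv_var_add[of i f "- f"] by (simp add: eq_neg_iff_add_eq_0 add.commute)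

lemma pderiv_var_single:
  "pderiv_var i (Poly_Mapping.single m a) =
   Poly_Mapping.single (m - Poly_Mapping.single i 1) (of_nat (Poly_Mapping.lookup m i) * (a::'k::field))"
  by (subst pderiv_var_eq_sum[of "{m}"]) auto

lemma pderiv_var_single_mult:
  "pderiv_var i (Poly_Mapping.single m a * Poly_Mapping.single n b) =
     pderiv_var i (Poly_Mapping.single m a) * Poly_Mapping.single n b +
     Poly_Mapping.single m a * pderiv_var i (Poly_Mapping.single n (b::'k::field))"
proof -
  have shift_left: "m - Poly_Mapping.single i 1 + n = m + n - Poly_Mapping.single i 1"
    if "Poly_Mapping.lookup m i \<noteq> 0"
    by (rule poly_mapping_eqI) (use that in \<open>auto simp: lookup_add lookup_minus lookup_single when_def\<close>)
  have shift_right: "m + (n - Poly_Mapping.single i 1) = m + n - Poly_Mapping.single i 1"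
    if "Poly_Mapping.lookup n i \<noteq> 0"
    by (rule poly_mapping_eqI) (use that in \<open>auto simp: lookup_add lookup_minus lookup_single when_def\<close>)
  have "Poly_Mapping.single (m - Poly_Mapping.single i 1 + n) (of_nat (Poly_Mapping.lookup m i) * a * b)
     = Poly_Mapping.single (m + n - Poly_Mapping.single i 1) (of_nat (Poly_Mapping.lookup m i) * a * b)"
    by (cases "Poly_Mapping.lookup m i = 0") (simp, subst shift_left, simp_all)
  moreover have "Poly_Mapping.single (m + (n - Poly_Mapping.single i 1)) (of_nat (Poly_Mapping.lookup n i) * a * b)
     = Poly_Mapping.single (m + n - Poly_Mapping.single i 1) (of_nat (Poly_Mapping.lookup n i) * a * b)"
    by (cases "Poly_Mapping.lookup n i = 0") (simp, subst shift_right, simp_all)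
  ultimately show ?thesis
    by (simp add: mult_single pderiv_var_single lookup_add mult_ac)
       (simp add: single_add[symmetric] algebra_simps mult_ac)
qed

lemma pderiv_var_mult: "pderiv_var i (f * g) = pderiv_var i f * g + f * pderiv_var i g"
  for f g :: "('n, 'k::field) poly"
proof -
  define F where "F m = Poly_Mapping.single m (Poly_Mapping.lookup f m)" for m
  define G where "G m = Poly_Mapping.single m (Poly_Mapping.lookup g m)" for m
  have f: "f = (\<Sum>m\<in>Poly_Mapping.keys f. F m)" unfolding F_def by (rule poly_mapping_expand)
  have g: "g = (\<Sum>m\<in>Poly_Mapping.keys g. G m)" unfolding G_def by (rule poly_mapping_expand)
  have "pderiv_var i (f * g) = (\<Sum>m\<in>Poly_Mapping.keys f. \<Sum>n\<in>Poly_Mapping.keys g.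
      pderiv_var i (F m) * G n + F m * pderiv_var i (G n))"
    unfolding F_def G_def
    by (subst poly_mapping_mult_expand) (simp add: pderiv_var_sum pderiv_var_single_mult)
  also have "\<dots> = pderiv_var i (\<Sum>m\<in>Poly_Mapping.keys f. F m) * (\<Sum>m\<in>Poly_Mapping.keys g. G m)
     + (\<Sum>m\<in>Poly_Mapping.keys f. F m) * pderiv_var i (\<Sum>m\<in>Poly_Mapping.keys g. G m)"
    by (simp add: sum.distrib pderiv_var_sum sum_product)
  finally show ?thesis
    using f g by simp
qed

lemma pconst_mult: "pconst a * pconst b = pconst (a * b)"
  by (simp add: pconst_def mult_single)

lemma pconst_add: "pconst a + pconst b = pconst (a + b)"
  by (simp add: pconst_def single_add)

lemma pconst_0 [simp]: "pconst 0 = 0"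
  by (simp add: pconst_def)

lemma pconst_1 [simp]: "pconst 1 = 1"
  by (simp add: pconst_def)

lemma pconst_sum: "pconst (\<Sum>i\<in>I. f i) = (\<Sum>i\<in>I. pconst (f i))"
  by (rule additive_sum) (simp_all add: pconst_add)

lemma pconst_uminus: "pconst (- a) = - pconst a"
  by (simp add: pconst_def single_uminus)

lemma peval_pconst [simp]: "peval (pconst a) x = a"
  for x :: "('n::finite, 'k::field) vec"
  by (simp add: pconst_def peval_single)

lemma peval_pvar [simp]: "peval (pvar i) x = x i"
  for x :: "('n::finite, 'k::field) vec"
proof -
  have "eval_monomial x (Poly_Mapping.single i 1) = (\<Prod>j\<in>UNIV. if j = i then x i else 1)"
    by (rule prod.cong) (auto simp: lookup_single when_def)
  then show ?thesis
    by (simp add: pvar_def peval_single)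
qed

lemma peval_plin: "peval (plin v) x = (\<Sum>i\<in>UNIV. v i * x i)"
  by (simp add: plin_def peval_sum peval_mult)

lemma pderiv_var_pconst [simp]: "pderiv_var i (pconst a) = 0"
  by (simp add: pconst_def pderiv_var_single)

lemma pderiv_var_pvar: "pderiv_var i (pvar j) = pconst (if i = j then 1 else 0)"
  by (auto simp: pvar_def pderiv_var_single pconst_def lookup_single)

lemma pderiv_var_plin: "pderiv_var i (plin v) = pconst (v i)"
proof -
  have "pderiv_var i (plin v) = (\<Sum>j\<in>UNIV. pconst (v j) * pconst (if i = j then 1 else 0))"
    by (simp add: plin_def pderiv_var_sum pderiv_var_mult pderiv_var_pvar)
  also have "\<dots> = (\<Sum>j\<in>UNIV. if j = i then pconst (v i) else 0)"
    by (rule sum.cong) auto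
  finally show ?thesis
    by simp
qed

lemma pdiff_plin [simp]: "pdiff (plin v) x = v"
  by (simp add: pdiff_def pderiv_var_plin)

lemma pdiff_pconst [simp]: "pdiff (pconst a) x = 0"
  by (simp add: pdiff_def fun_eq_iff)

lemma pdiff_add: "pdiff (f + g) x = pdiff f x + pdiff g x"
  for f g :: "('n::finite, 'k::field) poly"
  by (simp add: pdiff_def fun_eq_iff pderiv_var_add peval_add)

lemma pdiff_mult: "pdiff (f * g) x = vscale (peval f x) (pdiff g x) + vscale (peval g x) (pdiff f x)"
  for f g :: "('n::finite, 'k::field) poly"
  by (simp add: pdiff_def vscale_def fun_eq_iff pderiv_var_mult peval_add peval_mult mult_ac)

lemma plin_zero [simp]: "plin 0 = 0"
  by (simp add: plin_def)

lemma plin_add: "plin (u + v) = plin u + plin v"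
  by (simp add: plin_def pconst_add[symmetric] distrib_right sum.distrib)

lemma plin_scale: "plin (vscale a u) = pconst a * plin u"
  by (simp add: plin_def vscale_def pconst_mult[symmetric] sum_distrib_left mult.assoc)

lemma plin_sum: "plin (\<Sum>i\<in>S. f i) = (\<Sum>i\<in>S. plin (f i))"
  for f :: "_ \<Rightarrow> ('n::finite, 'k::field) vec"
  by (rule additive_sum[where F=plin]) (simp_all add: plin_add)

lemma plin_eq_0D: "plin v = 0 \<Longrightarrow> v = 0"
  by (metis pdiff_plin pdiff_pconst pconst_0)

lemma peval_pbracket: "peval (pbracket c f g) x = Phi c x (pdiff f x) (pdiff g x)"
proof -
  have "peval (pbracket c f g) x =
      (\<Sum>i\<in>UNIV. \<Sum>j\<in>UNIV. \<Sum>k\<in>UNIV. x k * (c i j k * pdiff f x i * pdiff g x j))"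
    by (simp add: pbracket_def peval_sum peval_mult pdiff_def mult_ac)
  also have "\<dots> = (\<Sum>k\<in>UNIV. \<Sum>i\<in>UNIV. \<Sum>j\<in>UNIV. x k * (c i j k * pdiff f x i * pdiff g x j))"
    by (subst sum.swap, subst (2) sum.swap) simp
  also have "\<dots> = Phi c x (pdiff f x) (pdiff g x)"
    unfolding Phi_def bracket_def by (simp add: sum_distrib_left)
  finally show ?thesis .
qed

lemma pbracket_add_left: "pbracket c (f + g) h = pbracket c f h + pbracket c g h"
  by (simp add: pbracket_def pderiv_var_add distrib_left distrib_right sum.distrib)

lemma pbracket_add_right: "pbracket c h (f + g) = pbracket c h f + pbracket c h g"
  by (simp add: pbracket_def pderiv_var_add distrib_left distrib_right sum.distrib)

lemma pbracket_mult_left: "pbracket c (f * g) h = f * pbracket c g h + g * pbracket c f h"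
  by (simp add: pbracket_def pderiv_var_mult distrib_left distrib_right sum.distrib
      sum_distrib_left mult_ac)

lemma pbracket_mult_right: "pbracket c h (f * g) = f * pbracket c h g + g * pbracket c h f"
  by (simp add: pbracket_def pderiv_var_mult distrib_left distrib_right sum.distrib
      sum_distrib_left mult_ac)

lemma pbracket_pconst_left [simp]: "pbracket c (pconst a) h = 0"
  by (simp add: pbracket_def)

lemma pbracket_pconst_right [simp]: "pbracket c h (pconst a) = 0"
  by (simp add: pbracket_def)

lemma pbracket_zero_left [simp]: "pbracket c 0 h = 0"
  by (simp add: pbracket_def)

lemma pbracket_uminus_left: "pbracket c (- f) g = - pbracket c f g"
  by (simp add: pbracket_def pderiv_var_uminus sum_negf)

lemma pbracket_diff_left: "pbracket c (f - g) k = pbracket c f k - pbracket c g k"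
  using pbracket_add_left[of c f "- g" k] by (simp add: pbracket_uminus_left)

lemma pbracket_sum_left: "pbracket c (\<Sum>i\<in>S. f i) g = (\<Sum>i\<in>S. pbracket c (f i) g)"
  by (rule additive_sum[where F="\<lambda>f. pbracket c f g"]) (simp_all add: pbracket_add_left)

lemma pbracket_plin: "pbracket c (plin u) (plin v) = plin (bracket c u v)"
proof -
  have "pbracket c (plin u) (plin v) =
      (\<Sum>i\<in>UNIV. \<Sum>j\<in>UNIV. \<Sum>k\<in>UNIV. pconst (c i j k * u i * v j) * pvar k)"
    by (simp add: pbracket_def pderiv_var_plin pconst_mult[symmetric] mult_ac)
  also have "\<dots> = (\<Sum>k\<in>UNIV. \<Sum>i\<in>UNIV. \<Sum>j\<in>UNIV. pconst (c i j k * u i * v j) * pvar k)"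
    by (subst sum.swap, subst (2) sum.swap) simp
  also have "\<dots> = plin (bracket c u v)"
    unfolding plin_def bracket_def by (simp add: pconst_sum sum_distrib_right)
  finally show ?thesis .
qed

lemma pbracket_antisym:
  assumes "\<And>i j k. c i j k = - c j i k"
  shows "pbracket c g f = - pbracket c f g"
proof -
  have "pbracket c g f = (\<Sum>i\<in>UNIV. \<Sum>j\<in>UNIV. \<Sum>k\<in>UNIV.
      pconst (c j i k) * pvar k * pderiv_var j g * pderiv_var i f)"
    unfolding pbracket_def by (rule sum.swap)
  also have "\<dots> = (\<Sum>i\<in>UNIV. \<Sum>j\<in>UNIV. \<Sum>k\<in>UNIV.
      - (pconst (c i j k) * pvar k * pderiv_var i f * pderiv_var j g))"
  proof (intro sum.cong refl)
    fix i j k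
    show "pconst (c j i k) * pvar k * pderiv_var j g * pderiv_var i f =
        - (pconst (c i j k) * pvar k * pderiv_var i f * pderiv_var j g)"
      using assms[of j i k] by (simp add: pconst_uminus mult_ac)
  qed
  also have "\<dots> = - pbracket c f g"
    by (simp add: pbracket_def sum_negf)
  finally show ?thesis .
qed

lemma sum_apply: "(\<Sum>a\<in>t. f a) i = (\<Sum>a\<in>t. f a i)"
  for f :: "_ \<Rightarrow> _ \<Rightarrow> 'k::comm_monoid_add"
  by (induction t rule: infinite_finite_induct) auto

interpretation VS: vector_space "vscale :: 'k::field \<Rightarrow> ('n \<Rightarrow> 'k) \<Rightarrow> ('n \<Rightarrow> 'k)"
  by unfold_locales (auto simp: vscale_def fun_eq_iff algebra_simps)

lemma vscale_sum: "(\<Sum>a\<in>t. vscale (r a) a) = (\<lambda>i. \<Sum>a\<in>t. r a * a i)"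
  by (simp add: fun_eq_iff sum_apply vscale_def)

lemma kspan_eq_span: "kspan X = VS.span X"
  unfolding kspan_def VS.span_explicit by (auto simp: vscale_sum)

lemma is_subspace_iff_subspace: "is_subspace U = VS.subspace U"
  unfolding is_subspace_def VS.subspace_def by auto

lemma lin_indep_iff_independent:
  assumes "finite B"
  shows "lin_indep B \<longleftrightarrow> VS.independent B"
proof
  assume indep: "lin_indep B"
  show "VS.independent B"
    unfolding VS.dependent_explicit
  proof clarify
    fix t u v
    assume t: "finite t" "t \<subseteq> B" "(\<Sum>v\<in>t. vscale (u v) v) = 0" "v \<in> t" "u v \<noteq> 0"
    define a where "a w = (if w \<in> t then u w else 0)" for w
    have "(\<Sum>w\<in>B. vscale (a w) w) = (\<Sum>w\<in>t. vscale (u w) w)"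
      unfolding a_def using t assms
      by (intro sum.mono_neutral_cong_right) (auto simp: vscale_def fun_eq_iff)
    then have "(\<lambda>i. \<Sum>w\<in>B. a w * w i) = 0"
      using t(3) by (simp add: vscale_sum)
    with indep have "a v = 0"
      using t unfolding lin_indep_def by blast
    then show False
      using t unfolding a_def by simp
  qed
next
  assume "VS.independent B"
  then show "lin_indep B"
    using assms unfolding lin_indep_def VS.dependent_explicit
    by (auto simp: vscale_sum[symmetric])
qed

lemma kspan_subspace: "is_subspace (kspan X)"
  by (simp add: kspan_eq_span is_subspace_iff_subspace VS.subspace_span)

lemma kspan_superset: "X \<subseteq> kspan X"
  by (simp add: kspan_eq_span VS.span_superset)

lemma kspan_minimal: "X \<subseteq> U \<Longrightarrow> is_subspace U \<Longrightarrow> kspan X \<subseteq> U"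
  by (simp add: kspan_eq_span is_subspace_iff_subspace VS.span_minimal)

lemma kspan_mono: "X \<subseteq> Y \<Longrightarrow> kspan X \<subseteq> kspan Y"
  by (simp add: kspan_eq_span VS.span_mono)

lemma subspace_add: "is_subspace U \<Longrightarrow> u \<in> U \<Longrightarrow> v \<in> U \<Longrightarrow> u + v \<in> U"
  by (simp add: is_subspace_def)

lemma subspace_scale: "is_subspace U \<Longrightarrow> u \<in> U \<Longrightarrow> vscale a u \<in> U"
  by (simp add: is_subspace_def)

lemma subspace_zero: "is_subspace U \<Longrightarrow> 0 \<in> U"
  by (simp add: is_subspace_def)

lemma subspace_diff: "is_subspace U \<Longrightarrow> u \<in> U \<Longrightarrow> v \<in> U \<Longrightarrow> u - v \<in> U"
  by (simp add: is_subspace_iff_subspace VS.subspace_diff)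

lemma subspace_uminus: "is_subspace U \<Longrightarrow> u \<in> U \<Longrightarrow> - u \<in> U"
  by (simp add: is_subspace_iff_subspace VS.subspace_neg)

lemma subspace_sum: "is_subspace U \<Longrightarrow> (\<And>i. i \<in> I \<Longrightarrow> f i \<in> U) \<Longrightarrow> (\<Sum>i\<in>I. f i) \<in> U"
  by (simp add: is_subspace_iff_subspace VS.subspace_sum)

lemma subspace_combination:
  "is_subspace U \<Longrightarrow> (\<And>i. i \<in> I \<Longrightarrow> f i \<in> U) \<Longrightarrow> (\<Sum>i\<in>I. vscale (r i) (f i)) \<in> U"
  by (intro subspace_sum subspace_scale) auto

lemma vscale_simps [simp]: "vscale 1 u = u" "vscale 0 u = 0" "vscale a 0 = 0"
  by (auto simp: vscale_def fun_eq_iff)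

lemma vscale_apply: "vscale a u i = a * u i"
  by (simp add: vscale_def)

lemma linear_on_combination:
  fixes F :: "('n, 'k::field) vec \<Rightarrow> 'b::comm_monoid_add" and scale :: "'k \<Rightarrow> 'b \<Rightarrow> 'b"
  assumes U: "is_subspace U"
    and add: "\<And>u v. u \<in> U \<Longrightarrow> v \<in> U \<Longrightarrow> F (u + v) = F u + F v"
    and hom: "\<And>a u. u \<in> U \<Longrightarrow> F (vscale a u) = scale a (F u)"
    and scale_0: "\<And>b. scale 0 b = 0"
    and y: "\<And>i. i \<in> S \<Longrightarrow> y i \<in> U"
  shows "F (\<Sum>i\<in>S. vscale (r i) (y i)) = (\<Sum>i\<in>S. scale (r i) (F (y i)))"
  using y
proof (induction S rule: infinite_finite_induct)
  case (insert x S)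
  have x: "y x \<in> U" and S: "(\<Sum>i\<in>S. vscale (r i) (y i)) \<in> U"
    using insert.prems by (auto intro: subspace_combination[OF U])
  have "F (vscale (r x) (y x) + (\<Sum>i\<in>S. vscale (r i) (y i)))
      = scale (r x) (F (y x)) + F (\<Sum>i\<in>S. vscale (r i) (y i))"
    by (simp only: add[OF subspace_scale[OF U x] S] hom[OF x])
  then show ?case
    using insert.prems by (simp add: sum.insert[OF insert.hyps] insert.IH del: plus_fun_apply)
qed (use hom[of 0 0] subspace_zero[OF U] scale_0 in auto)

section \<open>Symplectic forms\<close>

locale symplectic_form =
  fixes V :: "('n, 'k::field) vec set" and \<omega> :: "('n, 'k) vec \<Rightarrow> ('n, 'k) vec \<Rightarrow> 'k"
  assumes subspace: "is_subspace V" and symplectic: "symplectic_on V \<omega>"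
begin

lemma linear_left:
  "u \<in> V \<Longrightarrow> v \<in> V \<Longrightarrow> w \<in> V \<Longrightarrow> \<omega> (vscale a u + vscale b v) w = a * \<omega> u w + b * \<omega> v w"
  using symplectic unfolding symplectic_on_def by blast

lemma linear_right:
  "u \<in> V \<Longrightarrow> v \<in> V \<Longrightarrow> w \<in> V \<Longrightarrow> \<omega> w (vscale a u + vscale b v) = a * \<omega> w u + b * \<omega> w v"
  using symplectic unfolding symplectic_on_def by blast

lemma alternating: "u \<in> V \<Longrightarrow> \<omega> u u = 0"
  using symplectic unfolding symplectic_on_def by blast

lemma nondegenerate: "u \<in> V \<Longrightarrow> (\<And>v. v \<in> V \<Longrightarrow> \<omega> u v = 0) \<Longrightarrow> u = 0"
  using symplectic unfolding symplectic_on_def by blast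

lemma add_left: "u \<in> V \<Longrightarrow> v \<in> V \<Longrightarrow> w \<in> V \<Longrightarrow> \<omega> (u + v) w = \<omega> u w + \<omega> v w"
  using linear_left[of u v w 1 1] by simp

lemma add_right: "u \<in> V \<Longrightarrow> v \<in> V \<Longrightarrow> w \<in> V \<Longrightarrow> \<omega> w (u + v) = \<omega> w u + \<omega> w v"
  using linear_right[of u v w 1 1] by simp

lemma scale_left: "u \<in> V \<Longrightarrow> w \<in> V \<Longrightarrow> \<omega> (vscale a u) w = a * \<omega> u w"
  using linear_left[of u u w a 0] by simp

lemma scale_right: "u \<in> V \<Longrightarrow> w \<in> V \<Longrightarrow> \<omega> w (vscale a u) = a * \<omega> w u"
  using linear_right[of u u w a 0] by simp

lemma diff_left: "u \<in> V \<Longrightarrow> v \<in> V \<Longrightarrow> w \<in> V \<Longrightarrow> \<omega> (u - v) w = \<omega> u w - \<omega> v w"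
  using linear_left[of u v w 1 "-1"] by (simp add: fun_eq_iff)

lemma combination_left:
  "(\<And>i. i \<in> S \<Longrightarrow> f i \<in> V) \<Longrightarrow> w \<in> V \<Longrightarrow>
    \<omega> (\<Sum>i\<in>S. vscale (r i) (f i)) w = (\<Sum>i\<in>S. r i * \<omega> (f i) w)"
  by (rule linear_on_combination[OF subspace, where F="\<lambda>u. \<omega> u w"]) (auto simp: add_left scale_left)

lemma combination_right:
  "(\<And>i. i \<in> S \<Longrightarrow> f i \<in> V) \<Longrightarrow> w \<in> V \<Longrightarrow>
    \<omega> w (\<Sum>i\<in>S. vscale (r i) (f i)) = (\<Sum>i\<in>S. r i * \<omega> w (f i))"
  by (rule linear_on_combination[OF subspace, where F="\<omega> w"]) (auto simp: add_right scale_right)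

lemma skew: "u \<in> V \<Longrightarrow> v \<in> V \<Longrightarrow> \<omega> u v = - \<omega> v u"
  using alternating[of "u + v"] alternating[of u] alternating[of v]
  by (simp add: add_left add_right subspace_add[OF subspace] eq_neg_iff_add_eq_0 add.commute)

end

locale symplectic_form_basis = symplectic_form +
  fixes Bs
  assumes finite_basis: "finite Bs" and basis_indep: "lin_indep Bs" and basis_span: "kspan Bs = V"
begin

lemma basis_subset: "Bs \<subseteq> V"
  using basis_span kspan_superset by blast

lemma basis_independent: "VS.independent Bs"
  using lin_indep_iff_independent finite_basis basis_indep by blast

lemma basis_coefficients_eq_0: "(\<Sum>l\<in>Bs. vscale (a l) l) = 0 \<Longrightarrow> l \<in> Bs \<Longrightarrow> a l = 0"
  using basis_independent finite_basis unfolding VS.dependent_explicit by blast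

lemma basis_expansion:
  assumes "\<eta> \<in> V"
  obtains r where "\<eta> = (\<Sum>l\<in>Bs. vscale (r l) l)"
proof -
  obtain t r where t: "finite t" "t \<subseteq> Bs" "\<eta> = (\<Sum>a\<in>t. vscale (r a) a)"
    using assms basis_span unfolding kspan_eq_span VS.span_explicit by blast
  have "(\<Sum>a\<in>t. vscale (r a) a) = (\<Sum>l\<in>Bs. vscale (if l \<in> t then r l else 0) l)"
    using t finite_basis by (intro sum.mono_neutral_cong_left) auto
  with t(3) show thesis
    by (intro that[of "\<lambda>l. if l \<in> t then r l else 0"]) simp
qed

lemma eq_0_if_pairings_0:
  assumes v: "v \<in> V" and pairings: "\<And>l. l \<in> Bs \<Longrightarrow> \<omega> v l = 0"
  shows "v = 0"
proof (rule nondegenerate[OF v])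
  fix \<eta> assume "\<eta> \<in> V"
  then obtain r where \<eta>: "\<eta> = (\<Sum>l\<in>Bs. vscale (r l) l)"
    by (rule basis_expansion)
  have "\<omega> v \<eta> = (\<Sum>l\<in>Bs. r l * \<omega> v l)"
    unfolding \<eta> using v basis_subset by (intro combination_right) auto
  then show "\<omega> v \<eta> = 0"
    using pairings by simp
qed

definition flat where
  "flat v = (\<Sum>l\<in>Bs. vscale (\<omega> v l) l)"

lemma flat_in_V: "flat v \<in> V"
  unfolding flat_def using basis_subset by (intro subspace_combination[OF subspace]) auto

lemma flat_combination:
  assumes "S \<subseteq> V"
  shows "flat (\<Sum>b\<in>S. vscale (r b) b) = (\<Sum>b\<in>S. vscale (r b) (flat b))"
proof -
  have "flat (\<Sum>b\<in>S. vscale (r b) b) = (\<Sum>l\<in>Bs. \<Sum>b\<in>S. vscale (r b) (vscale (\<omega> b l) l))"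
    unfolding flat_def using assms basis_subset
    by (simp add: combination_left subset_iff VS.scale_sum_left VS.scale_scale)
  also have "\<dots> = (\<Sum>b\<in>S. vscale (r b) (flat b))"
    unfolding flat_def by (subst sum.swap) (simp add: VS.scale_sum_right)
  finally show ?thesis .
qed

lemma flat_inj_on: "inj_on flat V"
proof (rule inj_onI)
  fix u v assume uv: "u \<in> V" "v \<in> V" "flat u = flat v"
  have "(\<Sum>l\<in>Bs. vscale (\<omega> (u - v) l) l) = flat u - flat v"
    unfolding flat_def using uv(1,2) basis_subset
    by (simp add: sum_subtractf[symmetric] diff_left subset_iff VS.scale_left_diff_distrib)
  then have "\<omega> (u - v) l = 0" if "l \<in> Bs" for l
    using uv(3) that basis_coefficients_eq_0[of "\<lambda>l. \<omega> (u - v) l"] by auto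
  then have "u - v = 0"
    using subspace_diff[OF subspace uv(1,2)] by (intro eq_0_if_pairings_0)
  then show "u = v"
    by simp
qed

lemma inj_on_flat_basis: "inj_on flat Bs"
  using flat_inj_on basis_subset by (rule inj_on_subset)

lemma independent_flat_basis: "VS.independent (flat ` Bs)"
proof (rule VS.independent_if_scalars_zero)
  show "finite (flat ` Bs)"
    using finite_basis by simp
next
  fix f x assume vanish: "(\<Sum>x\<in>flat ` Bs. vscale (f x) x) = 0" and x: "x \<in> flat ` Bs"
  let ?b = "\<Sum>b\<in>Bs. vscale (f (flat b)) b"
  have "flat ?b = (\<Sum>x\<in>flat ` Bs. vscale (f x) x)"
    by (simp add: flat_combination[OF basis_subset] sum.reindex[OF inj_on_flat_basis])
  also have "\<dots> = flat 0"
    using vanish flat_combination[OF basis_subset, of "\<lambda>_. 0"] by simp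
  finally have "flat ?b = flat 0" .
  moreover have "?b \<in> V"
    using basis_subset by (intro subspace_combination[OF subspace]) auto
  ultimately have "?b = 0"
    using inj_onD[OF flat_inj_on] subspace_zero[OF subspace] by blast
  then show "f x = 0"
    using basis_coefficients_eq_0[of "\<lambda>b. f (flat b)"] x by auto
qed

lemma V_subset_span_flat_basis: "V \<subseteq> VS.span (flat ` Bs)"
proof
  fix a assume a: "a \<in> V"
  show "a \<in> VS.span (flat ` Bs)"
  proof (rule ccontr)
    assume not_in: "a \<notin> VS.span (flat ` Bs)"
    have "VS.independent (insert a (flat ` Bs))"
      using VS.independent_insertI[OF not_in independent_flat_basis] .
    moreover have "insert a (flat ` Bs) \<subseteq> VS.span Bs"
      using a flat_in_V basis_span kspan_eq_span by auto
    ultimately have "card (insert a (flat ` Bs)) \<le> card Bs"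
      by (rule VS.independent_span_bound[OF finite_basis, THEN conjunct2])
    moreover have "a \<notin> flat ` Bs"
      using not_in VS.span_superset by blast
    ultimately show False
      using finite_basis card_image[OF inj_on_flat_basis] by simp
  qed
qed

lemma exists_prescribed_pairings: "\<exists>v\<in>V. \<forall>l\<in>Bs. \<omega> v l = \<phi> l"
proof -
  define target where "target = (\<Sum>l\<in>Bs. vscale (\<phi> l) l)"
  have "target \<in> V"
    unfolding target_def using basis_subset by (intro subspace_combination[OF subspace]) auto
  then obtain t r where t: "t \<subseteq> flat ` Bs" "target = (\<Sum>a\<in>t. vscale (r a) a)"
    using V_subset_span_flat_basis unfolding VS.span_explicit by blast
  define s where "s = {b\<in>Bs. flat b \<in> t}"
  define w where "w = (\<Sum>b\<in>s. vscale (r (flat b)) b)"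
  have s: "s \<subseteq> Bs" "t = flat ` s"
    using t(1) unfolding s_def by auto
  have w: "w \<in> V"
    unfolding w_def using s basis_subset by (intro subspace_combination[OF subspace]) auto
  have "flat w = target"
    unfolding w_def t(2) s(2) using s(1) basis_subset
    by (simp add: flat_combination sum.reindex[OF inj_on_subset[OF inj_on_flat_basis s(1)]])
  then have "(\<Sum>l\<in>Bs. vscale (\<omega> w l - \<phi> l) l) = 0"
    unfolding flat_def target_def
    by (simp add: sum_subtractf VS.scale_left_diff_distrib)
  then have "\<forall>l\<in>Bs. \<omega> w l = \<phi> l"
    using basis_coefficients_eq_0 by fastforce
  with w show ?thesis
    by blast
qed

lemma riesz_representation:
  assumes add: "\<And>u v. u \<in> V \<Longrightarrow> v \<in> V \<Longrightarrow> \<psi> (u + v) = \<psi> u + \<psi> v"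
    and hom: "\<And>a u. u \<in> V \<Longrightarrow> \<psi> (vscale a u) = a * \<psi> u"
  obtains v where "v \<in> V" "\<And>\<eta>. \<eta> \<in> V \<Longrightarrow> \<omega> v \<eta> = \<psi> \<eta>"
proof -
  obtain v where v: "v \<in> V" "\<forall>l\<in>Bs. \<omega> v l = \<psi> l"
    using exists_prescribed_pairings by blast
  have "\<omega> v \<eta> = \<psi> \<eta>" if "\<eta> \<in> V" for \<eta>
  proof -
    obtain r where r: "\<eta> = (\<Sum>l\<in>Bs. vscale (r l) l)"
      using \<open>\<eta> \<in> V\<close> by (rule basis_expansion)
    have "\<psi> \<eta> = (\<Sum>l\<in>Bs. r l * \<psi> l)"
      unfolding r using basis_subset
      by (intro linear_on_combination[OF subspace add hom]) auto
    then show ?thesis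
      unfolding r using v basis_subset by (simp add: combination_right subset_iff)
  qed
  with v(1) show thesis
    by (rule that)
qed

definition dual_vec where
  "dual_vec k = (SOME v. v \<in> V \<and> (\<forall>l\<in>Bs. \<omega> v l = (if k = l then 1 else 0)))"

lemma dual_vec: "dual_vec k \<in> V" "l \<in> Bs \<Longrightarrow> \<omega> (dual_vec k) l = (if k = l then 1 else 0)"
  using someI_ex[OF exists_prescribed_pairings[of "\<lambda>l. if k = l then 1 else 0", unfolded Bex_def]]
  unfolding dual_vec_def by blast+

lemma expansion_dual_vec_left:
  assumes "\<eta> \<in> V"
  shows "(\<Sum>k\<in>Bs. vscale (\<omega> (dual_vec k) \<eta>) k) = \<eta>"
proof -
  obtain r where r: "\<eta> = (\<Sum>l\<in>Bs. vscale (r l) l)"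
    using assms by (rule basis_expansion)
  have "\<omega> (dual_vec k) \<eta> = r k" if "k \<in> Bs" for k
    unfolding r using that basis_subset finite_basis
    by (simp add: combination_right dual_vec subset_iff if_distrib cong: if_cong)
  then show ?thesis
    using r by simp
qed

lemma expansion_dual_vec_right:
  assumes u: "u \<in> V"
  shows "(\<Sum>k\<in>Bs. vscale (\<omega> u k) (dual_vec k)) = u"
proof -
  let ?s = "\<Sum>k\<in>Bs. vscale (\<omega> u k) (dual_vec k)"
  have s: "?s \<in> V"
    by (intro subspace_combination[OF subspace] dual_vec(1))
  have "\<omega> ?s l = \<omega> u l" if "l \<in> Bs" for l
    using that basis_subset finite_basis
    by (simp add: combination_left dual_vec subset_iff if_distrib cong: if_cong)
  then have "\<omega> (?s - u) l = 0" if "l \<in> Bs" for l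
    using that basis_subset s u by (simp add: diff_left subset_iff)
  then have "?s - u = 0"
    using eq_0_if_pairings_0 subspace_diff[OF subspace s u] by blast
  then show ?thesis
    by simp
qed

end

section \<open>Lie brackets and the form \<open>\<Phi>\<^sub>x\<close>\<close>

lemma bracket_add_left: "bracket c (u + v) w = bracket c u w + bracket c v w"
  by (simp add: bracket_def fun_eq_iff distrib_left distrib_right sum.distrib)

lemma bracket_add_right: "bracket c w (u + v) = bracket c w u + bracket c w v"
  by (simp add: bracket_def fun_eq_iff distrib_left distrib_right sum.distrib)

lemma bracket_scale_left: "bracket c (vscale a u) w = vscale a (bracket c u w)"
  by (simp add: bracket_def vscale_def fun_eq_iff sum_distrib_left mult_ac)

lemma bracket_scale_right: "bracket c w (vscale a u) = vscale a (bracket c w u)"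
  by (simp add: bracket_def vscale_def fun_eq_iff sum_distrib_left mult_ac)

lemma bracket_uminus_left: "bracket c (- u) w = - bracket c u w"
  by (simp add: bracket_def fun_eq_iff sum_negf)

definition unit_vec :: "'n \<Rightarrow> ('n, 'k::field) vec" where
  "unit_vec i = (\<lambda>t. if t = i then 1 else 0)"

lemma bracket_unit_vec: "bracket c (unit_vec i) (unit_vec j) k = c i j k"
proof -
  have "bracket c (unit_vec i) (unit_vec j) k =
      (\<Sum>a\<in>UNIV. \<Sum>b\<in>UNIV. if a = i \<and> b = j then c i j k else 0)"
    unfolding bracket_def unit_vec_def by (intro sum.cong refl) auto
  also have "\<dots> = (\<Sum>a\<in>UNIV. if a = i then (\<Sum>b\<in>UNIV. if b = j then c i j k else 0) else 0)"
    by (intro sum.cong refl) auto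
  finally show ?thesis
    by simp
qed

lemma bracket_self: "is_lie_algebra c \<Longrightarrow> bracket c u u = 0"
  unfolding is_lie_algebra_def by blast

lemma jacobi: "is_lie_algebra c \<Longrightarrow>
    bracket c (bracket c a b) d + bracket c (bracket c b d) a + bracket c (bracket c d a) b = 0"
  unfolding is_lie_algebra_def by blast

lemma structure_constants_antisym:
  assumes "is_lie_algebra c"
  shows "c i j k = - c j i k"
proof -
  have "0 = bracket c (unit_vec i + unit_vec j) (unit_vec i + unit_vec j) k"
    using bracket_self[OF assms] by simp
  also have "\<dots> = c i j k + c j i k"
    using bracket_self[OF assms]
    by (simp add: bracket_add_left bracket_add_right bracket_unit_vec[symmetric])
  finally show ?thesis
    by (simp add: eq_neg_iff_add_eq_0)
qed

lemma bracket_antisym: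
  assumes "is_lie_algebra c"
  shows "bracket c v u = - bracket c u v"
proof -
  have "bracket c v u = (\<lambda>k. \<Sum>i\<in>UNIV. \<Sum>j\<in>UNIV. c j i k * v j * u i)"
    unfolding bracket_def by (subst sum.swap) (rule refl)
  also have "\<dots> = (\<lambda>k. \<Sum>i\<in>UNIV. \<Sum>j\<in>UNIV. - (c i j k * u i * v j))"
  proof (intro ext sum.cong refl)
    fix k i j
    show "c j i k * v j * u i = - (c i j k * u i * v j)"
      using structure_constants_antisym[OF assms, of j i k] by (simp add: mult_ac)
  qed
  also have "\<dots> = - bracket c u v"
    by (simp add: bracket_def fun_eq_iff sum_negf)
  finally show ?thesis .
qed

lemma Phi_add_left: "Phi c x (u + v) w = Phi c x u w + Phi c x v w"
  by (simp add: Phi_def bracket_add_left distrib_left sum.distrib)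

lemma Phi_add_right: "Phi c x w (u + v) = Phi c x w u + Phi c x w v"
  by (simp add: Phi_def bracket_add_right distrib_left sum.distrib)

lemma Phi_scale_left: "Phi c x (vscale a u) w = a * Phi c x u w"
  by (simp add: Phi_def bracket_scale_left vscale_apply sum_distrib_left mult_ac)

lemma Phi_scale_right: "Phi c x w (vscale a u) = a * Phi c x w u"
  by (simp add: Phi_def bracket_scale_right vscale_apply sum_distrib_left mult_ac)

lemma Phi_diff_left: "Phi c x (u - v) w = Phi c x u w - Phi c x v w"
  using Phi_add_left[of c x u "- v" w]
  by (simp add: Phi_def bracket_uminus_left sum_negf)

lemma Phi_zero_left [simp]: "Phi c x 0 w = 0"
  by (simp add: Phi_def bracket_def)

lemma Phi_zero_right [simp]: "Phi c x w 0 = 0"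
  by (simp add: Phi_def bracket_def)

lemma Phi_antisym: "is_lie_algebra c \<Longrightarrow> Phi c x v u = - Phi c x u v"
  by (simp add: Phi_def bracket_antisym[of c v u] sum_negf)

lemma Phi_self: "is_lie_algebra c \<Longrightarrow> Phi c x u u = 0"
  by (simp add: Phi_def bracket_self)

lemma Phi_kspan_left:
  assumes "\<And>g. g \<in> G \<Longrightarrow> Phi c x g \<eta> = 0" "y \<in> kspan G"
  shows "Phi c x y \<eta> = 0"
proof -
  have "is_subspace {y. Phi c x y \<eta> = 0}"
    by (simp add: is_subspace_def Phi_add_left Phi_scale_left)
  then show ?thesis
    using kspan_minimal[of G "{y. Phi c x y \<eta> = 0}"] assms by blast
qed

lemma Phi_kspan_right:
  assumes "\<And>g. g \<in> G \<Longrightarrow> Phi c x \<eta> g = 0" "y \<in> kspan G"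
  shows "Phi c x \<eta> y = 0"
proof -
  have "is_subspace {y. Phi c x \<eta> y = 0}"
    by (simp add: is_subspace_def Phi_add_right Phi_scale_right)
  then show ?thesis
    using kspan_minimal[of G "{y. Phi c x \<eta> y = 0}"] assms by blast
qed

lemma isotropic_kspan:
  assumes "\<And>g h. g \<in> G \<Longrightarrow> h \<in> G \<Longrightarrow> Phi c x g h = 0"
  shows "isotropic c x (kspan G)"
  unfolding isotropic_def
proof (intro ballI)
  fix u v assume u: "u \<in> kspan G" and v: "v \<in> kspan G"
  have "Phi c x g v = 0" if "g \<in> G" for g
    using Phi_kspan_right[of G c x g v] assms that v by blast
  then show "Phi c x u v = 0"
    using Phi_kspan_left[of G c x v u] u by blast
qed

lemma subspace_extend_line:
  assumes U: "is_subspace U"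
  shows "is_subspace {u + vscale t y | u t. u \<in> U}"
  unfolding is_subspace_def
proof (intro conjI ballI allI)
  show "0 \<in> {u + vscale t y | u t. u \<in> U}"
    using subspace_zero[OF U] by (intro CollectI exI[of _ 0] exI[of _ 0]) simp
next
  fix a b assume "a \<in> {u + vscale t y | u t. u \<in> U}" "b \<in> {u + vscale t y | u t. u \<in> U}"
  then obtain u1 t1 u2 t2 where "a = u1 + vscale t1 y" "b = u2 + vscale t2 y" "u1 \<in> U" "u2 \<in> U"
    by blast
  then show "a + b \<in> {u + vscale t y | u t. u \<in> U}"
    by (intro CollectI exI[of _ "u1 + u2"] exI[of _ "t1 + t2"])
       (auto simp: subspace_add[OF U] fun_eq_iff algebra_simps vscale_apply)
next
  fix s a assume "a \<in> {u + vscale t y | u t. u \<in> U}"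
  then obtain u1 t1 where "a = u1 + vscale t1 y" "u1 \<in> U"
    by blast
  then show "vscale s a \<in> {u + vscale t y | u t. u \<in> U}"
    by (intro CollectI exI[of _ "vscale s u1"] exI[of _ "s * t1"])
       (auto simp: subspace_scale[OF U] fun_eq_iff algebra_simps vscale_apply)
qed

lemma max_isotropic_absorb:
  assumes lie: "is_lie_algebra c" and max: "max_isotropic_in c x U W" and W: "is_subspace W"
    and y: "y \<in> W" and orth: "\<And>u. u \<in> U \<Longrightarrow> Phi c x y u = 0"
  shows "y \<in> U"
proof -
  have U: "is_subspace U" "U \<subseteq> W" "isotropic c x U"
    and U_max: "\<And>U'. is_subspace U' \<Longrightarrow> U \<subseteq> U' \<Longrightarrow> U' \<subseteq> W \<Longrightarrow> isotropic c x U' \<Longrightarrow> U' = U"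
    using max unfolding max_isotropic_in_def by blast+
  define U' where "U' = {u + vscale t y | u t. u \<in> U}"
  have "is_subspace U'"
    unfolding U'_def using U(1) by (rule subspace_extend_line)
  moreover have "U \<subseteq> U'"
    unfolding U'_def by (force intro: exI[of _ 0])
  moreover have "U' \<subseteq> W"
    unfolding U'_def using U(2) y by (auto intro!: subspace_add[OF W] subspace_scale[OF W])
  moreover have "isotropic c x U'"
    unfolding isotropic_def U'_def
  proof clarify
    fix u1 t1 u2 t2 assume "u1 \<in> U" "u2 \<in> U"
    then show "Phi c x (u1 + vscale t1 y) (u2 + vscale t2 y) = 0"
      using U(3) orth Phi_antisym[OF lie, of x u1 y] Phi_self[OF lie, of x y]
      unfolding isotropic_def by (simp add: Phi_add_left Phi_add_right Phi_scale_left Phi_scale_right)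
  qed
  ultimately have "U' = U"
    using U_max by blast
  moreover have "y \<in> U'"
    unfolding U'_def using subspace_zero[OF U(1)] by (intro CollectI exI[of _ 0] exI[of _ 1]) simp
  ultimately show ?thesis
    by simp
qed

lemma max_isotropic_in_if_absorbing:
  assumes "is_subspace U" "U \<subseteq> W" "isotropic c x U"
    and absorb: "\<And>y. y \<in> W \<Longrightarrow> (\<And>u. u \<in> U \<Longrightarrow> Phi c x y u = 0) \<Longrightarrow> y \<in> U"
  shows "max_isotropic_in c x U W"
  using assms unfolding max_isotropic_in_def isotropic_def by blast

lemma alg_gen_diff: "f \<in> alg_gen G \<Longrightarrow> g \<in> alg_gen G \<Longrightarrow> f - g \<in> alg_gen G"
proof -
  assume "f \<in> alg_gen G" "g \<in> alg_gen G"
  moreover have "f - g = f + pconst (-1) * g"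
    by (simp add: pconst_uminus)
  ultimately show ?thesis
    by (simp only:) (intro alg_gen.add alg_gen.mult alg_gen.const)
qed

lemma alg_gen_sum: "(\<And>i. i \<in> S \<Longrightarrow> f i \<in> alg_gen G) \<Longrightarrow> (\<Sum>i\<in>S. f i) \<in> alg_gen G"
proof (induction S rule: infinite_finite_induct)
  case (insert x F)
  then show ?case
    by (simp add: alg_gen.add)
qed (use alg_gen.const[of 0 G] in simp_all)

lemma pdiff_alg_gen_in_subspace:
  fixes x :: "('n::finite, 'k::field) vec"
  assumes W: "is_subspace W" and G: "\<And>g. g \<in> G \<Longrightarrow> pdiff g x \<in> W" and f: "f \<in> alg_gen G"
  shows "pdiff f x \<in> W"
  using f
proof induction
  case (add f g)
  then show ?case
    unfolding pdiff_add by (blast intro: subspace_add[OF W])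
next
  case (mult f g)
  then show ?case
    unfolding pdiff_mult by (blast intro: subspace_add[OF W] subspace_scale[OF W])
qed (simp_all only: pdiff_pconst subspace_zero[OF W] G)

lemma pbracket_alg_gen_right:
  assumes "\<And>g. g \<in> G \<Longrightarrow> pbracket c f g = 0" and "h \<in> alg_gen G"
  shows "pbracket c f h = 0"
  using assms(2) by induction (auto simp: assms(1) pbracket_add_right pbracket_mult_right)

lemma pbracket_alg_gen_left:
  assumes "\<And>g. g \<in> G \<Longrightarrow> pbracket c g f = 0" and "h \<in> alg_gen G"
  shows "pbracket c h f = 0"
  using assms(2) by induction (auto simp: assms(1) pbracket_add_left pbracket_mult_left)

lemma poisson_commutative_alg_gen:
  assumes "\<And>f g. f \<in> G \<Longrightarrow> g \<in> G \<Longrightarrow> pbracket c f g = 0"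
  shows "poisson_commutative c (alg_gen G)"
  unfolding poisson_commutative_def
proof (intro ballI)
  fix f g assume f: "f \<in> alg_gen G" and g: "g \<in> alg_gen G"
  have "pbracket c f' g = 0" if "f' \<in> G" for f'
    using pbracket_alg_gen_right[of G c f' g] assms that g by blast
  then show "pbracket c f g = 0"
    using pbracket_alg_gen_left[of G c g f] f by blast
qed

lemma poisson_gen_subset_alg_gen:
  assumes "poisson_commutative c (alg_gen G)"
  shows "poisson_gen c G \<subseteq> alg_gen G"
proof
  fix f assume "f \<in> poisson_gen c G"
  then show "f \<in> alg_gen G"
  proof induction
    case (br f g)
    then have "pbracket c f g = 0"
      using assms unfolding poisson_commutative_def by blast
    then show ?case
      using alg_gen.const[of 0 G] by simp
  qed (auto intro: alg_gen.intros)
qed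

lemma dspan_mono: "F \<subseteq> F' \<Longrightarrow> dspan F x \<subseteq> dspan F' x"
  unfolding dspan_def by (intro kspan_mono image_mono)

lemma pdiff_in_dspan: "f \<in> F \<Longrightarrow> pdiff f x \<in> dspan F x"
  unfolding dspan_def by (rule kspan_superset[THEN subsetD]) (rule imageI)

lemma dspan_subspace: "is_subspace (dspan F x)"
  unfolding dspan_def by (rule kspan_subspace)

lemma dspan_subset_if_pdiff_in:
  "is_subspace W \<Longrightarrow> (\<And>f. f \<in> F \<Longrightarrow> pdiff f x \<in> W) \<Longrightarrow> dspan F x \<subseteq> W"
  unfolding dspan_def by (intro kspan_minimal) auto

lemma dspan_alg_gen: "dspan (alg_gen G) x = dspan G x"
  for x :: "('n::finite, 'k::field) vec"
proof
  show "dspan (alg_gen G) x \<subseteq> dspan G x"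
  proof (rule dspan_subset_if_pdiff_in[OF dspan_subspace])
    fix f assume "f \<in> alg_gen G"
    then show "pdiff f x \<in> dspan G x"
      by (rule pdiff_alg_gen_in_subspace[OF dspan_subspace pdiff_in_dspan, rotated])
  qed
  show "dspan G x \<subseteq> dspan (alg_gen G) x"
    by (intro dspan_mono subsetI alg_gen.gen)
qed

lemma isotropic_dspan_poisson_gen:
  assumes commuting: "\<And>f g. f \<in> G \<Longrightarrow> g \<in> G \<Longrightarrow> pbracket c f g = 0"
  shows "isotropic c x (dspan (poisson_gen c G) x)"
proof -
  have "poisson_gen c G \<subseteq> alg_gen G"
    using commuting by (intro poisson_gen_subset_alg_gen poisson_commutative_alg_gen)
  then have sub: "dspan (poisson_gen c G) x \<subseteq> dspan G x"
    using dspan_mono[of "poisson_gen c G" "alg_gen G" x] dspan_alg_gen[of G x] by simp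
  have "isotropic c x (kspan ((\<lambda>f. pdiff f x) ` G))"
  proof (rule isotropic_kspan)
    fix u v assume "u \<in> (\<lambda>f. pdiff f x) ` G" "v \<in> (\<lambda>f. pdiff f x) ` G"
    then obtain f g where "f \<in> G" "g \<in> G" "u = pdiff f x" "v = pdiff g x"
      by blast
    then show "Phi c x u v = 0"
      using commuting[of f g] peval_pbracket[of c f g x] by simp
  qed
  with sub show ?thesis
    unfolding isotropic_def dspan_def by blast
qed

lemma pbracket_Ann_Sym:
  assumes "f \<in> Ann c h" "g \<in> Sym h"
  shows "pbracket c f g = 0"
  using assms pbracket_alg_gen_right[of "plin ` h" c f g] unfolding Ann_def Sym_def by blast

lemma pdiff_Sym: "is_subspace h \<Longrightarrow> f \<in> Sym h \<Longrightarrow> pdiff f x \<in> h"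
  unfolding Sym_def by (rule pdiff_alg_gen_in_subspace) auto

lemma Phi_dspan_Ann:
  assumes "a \<in> dspan (Ann c h) x" "\<eta> \<in> h"
  shows "Phi c x a \<eta> = 0"
  using assms(1) unfolding dspan_def
proof (rule Phi_kspan_left[rotated])
  fix g assume "g \<in> (\<lambda>f. pdiff f x) ` Ann c h"
  then obtain f where f: "f \<in> Ann c h" "g = pdiff f x"
    by blast
  have "Phi c x g \<eta> = peval (pbracket c f (plin \<eta>)) x"
    by (simp add: f(2) peval_pbracket)
  with f(1) assms(2) show "Phi c x g \<eta> = 0"
    unfolding Ann_def by simp
qed


section \<open>Nonzero polynomials are not zero divisors\<close>

text \<open>The library provides \<open>idom\<close> for polynomial mappings only over linearly ordered
  variables, so we rename the variables injectively into \<open>nat\<close>.\<close>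

definition rename_monomial :: "('n \<Rightarrow> nat) \<Rightarrow> ('n \<Rightarrow>\<^sub>0 nat) \<Rightarrow> (nat \<Rightarrow>\<^sub>0 nat)" where
  "rename_monomial g m = Abs_poly_mapping (\<lambda>j. if j \<in> range g then Poly_Mapping.lookup m (inv g j) else 0)"

lemma lookup_rename_monomial:
  fixes g :: "'n::finite \<Rightarrow> nat"
  shows "Poly_Mapping.lookup (rename_monomial g m) j =
    (if j \<in> range g then Poly_Mapping.lookup m (inv g j) else 0)"
proof -
  have "finite {j. (if j \<in> range g then Poly_Mapping.lookup m (inv g j) else 0) \<noteq> 0}"
    by (rule finite_subset[of _ "range g"]) auto
  then show ?thesis
    unfolding rename_monomial_def by simp
qed

lemma rename_monomial_add: "rename_monomial g (m + n) = rename_monomial g m + rename_monomial g n"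
  for g :: "'n::finite \<Rightarrow> nat"
  by (rule poly_mapping_eqI) (simp add: lookup_rename_monomial lookup_add)

lemma inj_rename_monomial:
  fixes g :: "'n::finite \<Rightarrow> nat"
  assumes "inj g"
  shows "inj (rename_monomial g)"
proof (rule injI, rule poly_mapping_eqI)
  fix m n i assume "rename_monomial g m = rename_monomial g n"
  then have "Poly_Mapping.lookup (rename_monomial g m) (g i) = Poly_Mapping.lookup (rename_monomial g n) (g i)"
    by simp
  then show "Poly_Mapping.lookup m i = Poly_Mapping.lookup n i"
    using assms by (simp add: lookup_rename_monomial)
qed

definition rename_vars :: "('n \<Rightarrow> nat) \<Rightarrow> (('n \<Rightarrow>\<^sub>0 nat) \<Rightarrow>\<^sub>0 'k::zero) \<Rightarrow> ((nat \<Rightarrow>\<^sub>0 nat) \<Rightarrow>\<^sub>0 'k)" where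
  "rename_vars g p = Abs_poly_mapping (\<lambda>M.
      if M \<in> range (rename_monomial g) then Poly_Mapping.lookup p (inv (rename_monomial g) M) else 0)"

context
  fixes g :: "'n::finite \<Rightarrow> nat"
  assumes inj_g: "inj g"
begin

lemma lookup_rename_vars:
  "Poly_Mapping.lookup (rename_vars g p) M =
    (if M \<in> range (rename_monomial g) then Poly_Mapping.lookup p (inv (rename_monomial g) M) else 0)"
proof -
  have "{M. (if M \<in> range (rename_monomial g) then Poly_Mapping.lookup p (inv (rename_monomial g) M) else 0) \<noteq> 0}
      \<subseteq> rename_monomial g ` Poly_Mapping.keys p"
    using inj_rename_monomial[OF inj_g] by (auto simp: in_keys_iff split: if_splits)
  then have "finite {M. (if M \<in> range (rename_monomial g)
      then Poly_Mapping.lookup p (inv (rename_monomial g) M) else 0) \<noteq> 0}"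
    by (rule finite_subset) simp
  then show ?thesis
    unfolding rename_vars_def by simp
qed

lemma lookup_rename_vars_rename_monomial:
  "Poly_Mapping.lookup (rename_vars g p) (rename_monomial g m) = Poly_Mapping.lookup p m"
  using inj_rename_monomial[OF inj_g] by (simp add: lookup_rename_vars)

lemma rename_vars_add: "rename_vars g (p + q) = rename_vars g p + rename_vars g q"
  by (rule poly_mapping_eqI) (simp add: lookup_rename_vars lookup_add)

lemma rename_vars_zero: "rename_vars g 0 = 0"
  by (rule poly_mapping_eqI) (simp add: lookup_rename_vars)

lemma rename_vars_eq_0_iff: "rename_vars g p = 0 \<longleftrightarrow> p = 0"
  by (metis lookup_rename_vars_rename_monomial lookup_zero poly_mapping_eqI rename_vars_zero)

lemma rename_vars_single:
  "rename_vars g (Poly_Mapping.single m a) = Poly_Mapping.single (rename_monomial g m) a"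
proof (rule poly_mapping_eqI)
  fix M
  show "Poly_Mapping.lookup (rename_vars g (Poly_Mapping.single m a)) M =
      Poly_Mapping.lookup (Poly_Mapping.single (rename_monomial g m) a) M"
  proof (cases "M \<in> range (rename_monomial g)")
    case True
    then obtain m' where "M = rename_monomial g m'"
      by blast
    then show ?thesis
      using inj_rename_monomial[OF inj_g]
      by (auto simp: lookup_rename_vars_rename_monomial lookup_single when_def dest: injD)
  next
    case False
    then show ?thesis
      by (auto simp: lookup_rename_vars lookup_single when_def)
  qed
qed

lemma rename_vars_sum: "rename_vars g (\<Sum>i\<in>I. f i) = (\<Sum>i\<in>I. rename_vars g (f i))"
  by (rule additive_sum) (simp_all add: rename_vars_add rename_vars_zero)

lemma rename_vars_mult:
  fixes p q :: "('n \<Rightarrow>\<^sub>0 nat) \<Rightarrow>\<^sub>0 'k::field"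
  shows "rename_vars g (p * q) = rename_vars g p * rename_vars g q"
proof -
  have "rename_vars g (p * q) =
      (\<Sum>m\<in>Poly_Mapping.keys p. rename_vars g (Poly_Mapping.single m (Poly_Mapping.lookup p m))) *
      (\<Sum>n\<in>Poly_Mapping.keys q. rename_vars g (Poly_Mapping.single n (Poly_Mapping.lookup q n)))"
    by (subst poly_mapping_mult_expand)
       (simp add: rename_vars_sum mult_single rename_vars_single rename_monomial_add sum_product)
  then show ?thesis
    by (simp only: rename_vars_sum[symmetric] poly_mapping_expand[symmetric])
qed

end

lemma poly_mult_neq_0:
  fixes p q :: "('n::finite, 'k::field) poly"
  assumes "p \<noteq> 0" "q \<noteq> 0"
  shows "p * q \<noteq> 0"
proof -
  obtain g :: "'n \<Rightarrow> nat" where g: "inj g"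
    using finite_imp_inj_to_nat_seg[of "UNIV :: 'n set"] by auto
  show ?thesis
    using assms by (simp add: rename_vars_eq_0_iff[OF g, symmetric] rename_vars_mult[OF g])
qed

lemma generically_conj:
  fixes P Q :: "('n::finite, 'k::field) vec \<Rightarrow> bool"
  assumes "generically P" "generically Q"
  shows "generically (\<lambda>x. P x \<and> Q x)"
proof -
  obtain p :: "('n, 'k) poly" where p: "p \<noteq> 0" "\<And>x. peval p x \<noteq> 0 \<Longrightarrow> P x"
    using assms(1) unfolding generically_def by blast
  obtain q :: "('n, 'k) poly" where q: "q \<noteq> 0" "\<And>x. peval q x \<noteq> 0 \<Longrightarrow> Q x"
    using assms(2) unfolding generically_def by blast
  show ?thesis
    unfolding generically_def
    by (rule exI[of _ "p * q"]) (use p q poly_mult_neq_0 in \<open>auto simp: peval_mult\<close>)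
qed

lemma generically_plin_neq_0:
  fixes e :: "('n::finite, 'k::field) vec"
  assumes "e \<noteq> 0"
  shows "generically (\<lambda>x. peval (plin e) x \<noteq> 0)"
  unfolding generically_def using assms plin_eq_0D by blast

section \<open>Lifting elements of \<open>g\<close> into the annihilator of the Heisenberg ideal\<close>

locale heisenberg_ideal = symplectic_form_basis V \<omega> Bs
  for V :: "('n::finite, 'k::field_char_0) vec set" and \<omega> Bs +
  fixes c :: "'n \<Rightarrow> 'n \<Rightarrow> 'n \<Rightarrow> 'k" and h e
  assumes lie: "is_lie_algebra c"
    and h_subspace: "is_subspace h"
    and h_ideal: "\<And>\<xi> \<eta>. \<xi> \<in> h \<Longrightarrow> bracket c \<xi> \<eta> \<in> h"
    and e_neq_0: "e \<noteq> 0" and e_notin_V: "e \<notin> V"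
    and h_eq: "h = {v + vscale a e | v a. v \<in> V}"
    and bracket_V: "\<And>\<xi>1 \<xi>2. \<xi>1 \<in> V \<Longrightarrow> \<xi>2 \<in> V \<Longrightarrow> bracket c \<xi>1 \<xi>2 = vscale (\<omega> \<xi>1 \<xi>2) e"
    and e_central: "\<And>y. bracket c e y = 0"
begin

lemma bracket_e_right: "bracket c y e = 0"
  using bracket_antisym[OF lie, of y e] e_central by simp

lemma e_in_h: "e \<in> h"
proof -
  have "e = 0 + vscale 1 e"
    by simp
  then show ?thesis
    unfolding h_eq using subspace_zero[OF subspace] by blast
qed

lemma V_subset_h: "v \<in> V \<Longrightarrow> v \<in> h"
  unfolding h_eq by (metis (mono_tags, lifting) CollectI add.right_neutral vscale_simps(2))

lemma bracket_in_h_right: "\<eta> \<in> h \<Longrightarrow> bracket c \<xi> \<eta> \<in> h"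
  using h_ideal[of \<eta> \<xi>] bracket_antisym[OF lie, of \<xi> \<eta>] subspace_uminus[OF h_subspace] by metis

lemma h_decomp:
  assumes "y \<in> h"
  obtains v a where "v \<in> V" "y = v + vscale a e"
  using assms unfolding h_eq by blast

lemma h_decomp_unique:
  assumes "v \<in> V" "v' \<in> V" "v + vscale a e = v' + vscale a' e"
  shows "v = v' \<and> a = a'"
proof (cases "a = a'")
  case False
  have "v - v' = vscale (a' - a) e"
    using assms(3) by (simp add: fun_eq_iff algebra_simps vscale_apply)
  then have "e = vscale (1 / (a' - a)) (v - v')"
    using False by (simp add: fun_eq_iff vscale_apply)
  then have "e \<in> V"
    using subspace_scale[OF subspace subspace_diff[OF subspace assms(1,2)]] by simp
  with e_notin_V show ?thesis ..
qed (use assms in simp)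

definition V_part :: "('n, 'k) vec \<Rightarrow> ('n, 'k) vec" where
  "V_part y = fst (SOME p. fst p \<in> V \<and> y = fst p + vscale (snd p) e)"

definition e_part :: "('n, 'k) vec \<Rightarrow> 'k" where
  "e_part y = snd (SOME p. fst p \<in> V \<and> y = fst p + vscale (snd p) e)"

lemma V_part_e_part:
  assumes "y \<in> h"
  shows "V_part y \<in> V" "y = V_part y + vscale (e_part y) e"
proof -
  obtain v a where "v \<in> V" "y = v + vscale a e"
    using assms by (rule h_decomp)
  then have "\<exists>p. fst p \<in> V \<and> y = fst p + vscale (snd p) e"
    by (intro exI[of _ "(v, a)"]) simp
  from someI_ex[OF this] show "V_part y \<in> V" "y = V_part y + vscale (e_part y) e"
    unfolding V_part_def e_part_def by blast+
qed

lemma V_part_e_part_eq: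
  assumes "v \<in> V"
  shows "V_part (v + vscale a e) = v" "e_part (v + vscale a e) = a"
proof -
  have "v + vscale a e \<in> h"
    unfolding h_eq using assms by blast
  from h_decomp_unique[OF V_part_e_part(1)[OF this] assms V_part_e_part(2)[OF this, symmetric]]
  show "V_part (v + vscale a e) = v" "e_part (v + vscale a e) = a"
    by auto
qed

lemma V_part_e_part_add:
  assumes "y \<in> h" "z \<in> h"
  shows "V_part (y + z) = V_part y + V_part z" "e_part (y + z) = e_part y + e_part z"
proof -
  have "y + z = (V_part y + V_part z) + vscale (e_part y + e_part z) e"
    using V_part_e_part(2)[OF assms(1)] V_part_e_part(2)[OF assms(2)]
    by (simp add: fun_eq_iff algebra_simps vscale_apply)
  moreover have "V_part y + V_part z \<in> V"
    using V_part_e_part(1) assms by (blast intro: subspace_add[OF subspace])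
  ultimately show "V_part (y + z) = V_part y + V_part z" "e_part (y + z) = e_part y + e_part z"
    using V_part_e_part_eq by auto
qed

lemma V_part_e_part_scale:
  assumes "y \<in> h"
  shows "V_part (vscale t y) = vscale t (V_part y)" "e_part (vscale t y) = t * e_part y"
proof -
  have "vscale t y = vscale t (V_part y) + vscale (t * e_part y) e"
    using V_part_e_part(2)[OF assms] by (metis VS.scale_right_distrib VS.scale_scale)
  moreover have "vscale t (V_part y) \<in> V"
    using V_part_e_part(1)[OF assms] by (rule subspace_scale[OF subspace])
  ultimately show "V_part (vscale t y) = vscale t (V_part y)" "e_part (vscale t y) = t * e_part y"
    using V_part_e_part_eq by auto
qed

definition ad_V :: "('n, 'k) vec \<Rightarrow> ('n, 'k) vec \<Rightarrow> ('n, 'k) vec" where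
  "ad_V \<xi> \<eta> = V_part (bracket c \<xi> \<eta>)"

definition ad_e :: "('n, 'k) vec \<Rightarrow> ('n, 'k) vec \<Rightarrow> 'k" where
  "ad_e \<xi> \<eta> = e_part (bracket c \<xi> \<eta>)"

lemma ad_V_in_V: "\<eta> \<in> V \<Longrightarrow> ad_V \<xi> \<eta> \<in> V"
  unfolding ad_V_def using V_part_e_part(1) bracket_in_h_right V_subset_h by blast

lemma bracket_decomp: "\<eta> \<in> V \<Longrightarrow> bracket c \<xi> \<eta> = ad_V \<xi> \<eta> + vscale (ad_e \<xi> \<eta>) e"
  unfolding ad_V_def ad_e_def using V_part_e_part(2) bracket_in_h_right V_subset_h by blast

lemma ad_V_add: "u \<in> V \<Longrightarrow> v \<in> V \<Longrightarrow> ad_V \<xi> (u + v) = ad_V \<xi> u + ad_V \<xi> v"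
  unfolding ad_V_def by (simp add: bracket_add_right V_part_e_part_add bracket_in_h_right V_subset_h)

lemma ad_V_scale: "u \<in> V \<Longrightarrow> ad_V \<xi> (vscale a u) = vscale a (ad_V \<xi> u)"
  unfolding ad_V_def by (simp add: bracket_scale_right V_part_e_part_scale bracket_in_h_right V_subset_h)

lemma ad_e_add: "u \<in> V \<Longrightarrow> v \<in> V \<Longrightarrow> ad_e \<xi> (u + v) = ad_e \<xi> u + ad_e \<xi> v"
  unfolding ad_e_def by (simp add: bracket_add_right V_part_e_part_add bracket_in_h_right V_subset_h)

lemma ad_e_scale: "u \<in> V \<Longrightarrow> ad_e \<xi> (vscale a u) = a * ad_e \<xi> u"
  unfolding ad_e_def by (simp add: bracket_scale_right V_part_e_part_scale bracket_in_h_right V_subset_h)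

lemma ad_V_combination:
  "(\<And>i. i \<in> S \<Longrightarrow> y i \<in> V) \<Longrightarrow>
    ad_V \<xi> (\<Sum>i\<in>S. vscale (r i) (y i)) = (\<Sum>i\<in>S. vscale (r i) (ad_V \<xi> (y i)))"
  by (rule linear_on_combination[OF subspace]) (simp_all only: ad_V_add ad_V_scale vscale_simps)

text \<open>This is the Jacobi identity for \<open>\<xi>, p, q\<close>, using that \<open>e\<close> is central in \<open>g\<close>.\<close>

lemma ad_V_skew:
  assumes p: "p \<in> V" and q: "q \<in> V"
  shows "\<omega> (ad_V \<xi> p) q + \<omega> p (ad_V \<xi> q) = 0"
proof -
  have Dp: "ad_V \<xi> p \<in> V" and Dq: "ad_V \<xi> q \<in> V"
    using ad_V_in_V p q by auto
  have "bracket c (bracket c \<xi> p) q = vscale (\<omega> (ad_V \<xi> p) q) e"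
    using bracket_decomp[OF p] bracket_V[OF Dp q]
    by (simp add: bracket_add_left bracket_scale_left e_central)
  moreover have "bracket c (bracket c p q) \<xi> = 0"
    using bracket_V[OF p q] by (simp add: bracket_scale_left e_central)
  moreover have "bracket c (bracket c q \<xi>) p = vscale (- \<omega> (ad_V \<xi> q) p) e"
  proof -
    have "bracket c (bracket c q \<xi>) p = - bracket c (ad_V \<xi> q + vscale (ad_e \<xi> q) e) p"
      by (simp only: bracket_antisym[OF lie, of q \<xi>] bracket_uminus_left bracket_decomp[OF q])
    also have "\<dots> = - (bracket c (ad_V \<xi> q) p + vscale (ad_e \<xi> q) (bracket c e p))"
      by (simp only: bracket_add_left bracket_scale_left)
    also have "\<dots> = vscale (- \<omega> (ad_V \<xi> q) p) e"
      by (simp add: bracket_V[OF Dq p] e_central fun_eq_iff vscale_apply)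
    finally show ?thesis .
  qed
  ultimately have "vscale (\<omega> (ad_V \<xi> p) q - \<omega> (ad_V \<xi> q) p) e = 0"
    using jacobi[OF lie, of \<xi> p q] by (simp add: fun_eq_iff algebra_simps vscale_apply)
  then have "\<omega> (ad_V \<xi> p) q = \<omega> (ad_V \<xi> q) p"
    using e_neq_0 by (auto simp: fun_eq_iff vscale_apply)
  then show ?thesis
    using skew[OF Dq p] by simp
qed

definition ad_e_rep :: "('n, 'k) vec \<Rightarrow> ('n, 'k) vec" where
  "ad_e_rep \<xi> = (SOME v. v \<in> V \<and> (\<forall>\<eta>\<in>V. \<omega> v \<eta> = ad_e \<xi> \<eta>))"

lemma ad_e_rep: "ad_e_rep \<xi> \<in> V" "\<eta> \<in> V \<Longrightarrow> \<omega> (ad_e_rep \<xi>) \<eta> = ad_e \<xi> \<eta>"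
proof -
  obtain v where "v \<in> V" "\<And>\<eta>. \<eta> \<in> V \<Longrightarrow> \<omega> v \<eta> = ad_e \<xi> \<eta>"
    using riesz_representation[of "ad_e \<xi>"] ad_e_add ad_e_scale by blast
  then have "\<exists>v. v \<in> V \<and> (\<forall>\<eta>\<in>V. \<omega> v \<eta> = ad_e \<xi> \<eta>)"
    by blast
  from someI_ex[OF this] show "ad_e_rep \<xi> \<in> V" "\<eta> \<in> V \<Longrightarrow> \<omega> (ad_e_rep \<xi>) \<eta> = ad_e \<xi> \<eta>"
    unfolding ad_e_rep_def by blast+
qed

text \<open>By \<open>ad_V_skew\<close>, the bracket of \<open>quadratic_part \<xi>\<close> with \<open>v \<in> V\<close> is
  \<open>2 ad_V \<xi> v \<cdot> e\<close>. Subtracting half of it (this is where characteristic zero is used)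
  and the central correction \<open>e \<cdot> ad_e_rep \<xi>\<close> from \<open>e \<cdot> \<xi>\<close> kills the bracket with
  \<open>V\<close>; the bracket with \<open>e\<close> vanishes anyway.\<close>

definition quadratic_part :: "('n, 'k) vec \<Rightarrow> ('n, 'k) poly" where
  "quadratic_part \<xi> = (\<Sum>k\<in>Bs. plin (ad_V \<xi> k) * plin (dual_vec k))"

definition ann_lift :: "('n, 'k) vec \<Rightarrow> ('n, 'k) poly" where
  "ann_lift \<xi> = plin e * plin \<xi> - pconst (1/2) * quadratic_part \<xi> - plin e * plin (ad_e_rep \<xi>)"

lemma ad_V_expansion_left:
  assumes "v \<in> V"
  shows "(\<Sum>k\<in>Bs. vscale (\<omega> (dual_vec k) v) (ad_V \<xi> k)) = ad_V \<xi> v"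
proof -
  have "(\<Sum>k\<in>Bs. vscale (\<omega> (dual_vec k) v) (ad_V \<xi> k)) =
      ad_V \<xi> (\<Sum>k\<in>Bs. vscale (\<omega> (dual_vec k) v) k)"
    using basis_subset by (intro ad_V_combination[where y="\<lambda>k. k", symmetric]) auto
  then show ?thesis
    by (simp only: expansion_dual_vec_left[OF assms])
qed

lemma ad_V_expansion_right:
  assumes v: "v \<in> V"
  shows "(\<Sum>k\<in>Bs. vscale (\<omega> (ad_V \<xi> k) v) (dual_vec k)) = ad_V \<xi> v"
proof -
  have "\<omega> (ad_V \<xi> k) v = \<omega> (ad_V \<xi> v) k" if "k \<in> Bs" for k
    using that basis_subset ad_V_skew[of k v \<xi>] skew[of k "ad_V \<xi> v"] ad_V_in_V[OF v] v
    by (auto simp: eq_neg_iff_add_eq_0)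
  then show ?thesis
    using expansion_dual_vec_right[OF ad_V_in_V[OF v]] by simp
qed

lemma pbracket_alg_gen_plin_e: "f \<in> alg_gen (plin ` UNIV) \<Longrightarrow> pbracket c f (plin e) = 0"
  by (rule pbracket_alg_gen_left) (auto simp: pbracket_plin bracket_e_right)

lemma pbracket_quadratic_plin:
  assumes "a \<in> V" "b \<in> V" "v \<in> V"
  shows "pbracket c (plin a * plin b) (plin v) = plin (vscale (\<omega> b v) a + vscale (\<omega> a v) b) * plin e"
  using bracket_V[of b v] bracket_V[of a v] assms
  by (simp add: pbracket_mult_left pbracket_plin plin_scale plin_add algebra_simps)

lemma pbracket_quadratic_part:
  assumes v: "v \<in> V"
  shows "pbracket c (quadratic_part \<xi>) (plin v) = (plin (ad_V \<xi> v) + plin (ad_V \<xi> v)) * plin e"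
proof -
  have "pbracket c (quadratic_part \<xi>) (plin v) = (\<Sum>k\<in>Bs.
      plin (vscale (\<omega> (dual_vec k) v) (ad_V \<xi> k) + vscale (\<omega> (ad_V \<xi> k) v) (dual_vec k)) * plin e)"
    unfolding quadratic_part_def pbracket_sum_left
    using basis_subset ad_V_in_V dual_vec(1) v by (intro sum.cong refl pbracket_quadratic_plin) auto
  also have "\<dots> = (plin (\<Sum>k\<in>Bs. vscale (\<omega> (dual_vec k) v) (ad_V \<xi> k))
      + plin (\<Sum>k\<in>Bs. vscale (\<omega> (ad_V \<xi> k) v) (dual_vec k))) * plin e"
    by (simp add: plin_sum plin_add sum_distrib_right sum.distrib distrib_right)
  finally show ?thesis
    by (simp only: ad_V_expansion_left[OF v] ad_V_expansion_right[OF v])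
qed

lemma pbracket_ann_lift_V:
  assumes v: "v \<in> V"
  shows "pbracket c (ann_lift \<xi>) (plin v) = 0"
proof -
  let ?E = "plin e"
  have "pbracket c (?E * plin \<xi>) (plin v) = ?E * plin (ad_V \<xi> v) + pconst (ad_e \<xi> v) * ?E * ?E"
    using bracket_decomp[OF v, of \<xi>]
    by (simp add: pbracket_mult_left pbracket_plin e_central plin_add plin_scale algebra_simps)
  moreover have "pbracket c (pconst (1/2) * quadratic_part \<xi>) (plin v) = plin (ad_V \<xi> v) * ?E"
  proof -
    have "pbracket c (pconst (1/2) * quadratic_part \<xi>) (plin v) =
        (pconst (1/2) + pconst (1/2)) * plin (ad_V \<xi> v) * ?E"
      by (simp add: pbracket_mult_left pbracket_quadratic_part[OF v] algebra_simps)
    then show ?thesis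
      by (simp add: pconst_add)
  qed
  moreover have "pbracket c (?E * plin (ad_e_rep \<xi>)) (plin v) = ?E * pconst (ad_e \<xi> v) * ?E"
    using bracket_V[OF ad_e_rep(1) v, of \<xi>] ad_e_rep(2)[OF v, of \<xi>]
    by (simp add: pbracket_mult_left pbracket_plin e_central plin_scale algebra_simps)
  ultimately show ?thesis
    unfolding ann_lift_def pbracket_diff_left by (simp add: algebra_simps)
qed

lemma ann_lift_in_alg_gen: "ann_lift \<xi> \<in> alg_gen (plin ` UNIV)"
  unfolding ann_lift_def quadratic_part_def
  by (intro alg_gen_diff alg_gen.mult alg_gen_sum alg_gen.const alg_gen.gen) auto

lemma ann_lift_Ann: "ann_lift \<xi> \<in> Ann c h"
  unfolding Ann_def
proof (intro CollectI ballI)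
  fix \<eta> assume "\<eta> \<in> h"
  then obtain v a where va: "v \<in> V" "\<eta> = v + vscale a e"
    by (rule h_decomp)
  have "pbracket c (ann_lift \<xi>) (plin \<eta>) =
      pbracket c (ann_lift \<xi>) (plin v) + pbracket c (ann_lift \<xi>) (pconst a * plin e)"
    unfolding va(2) by (simp add: plin_add plin_scale pbracket_add_right)
  also have "\<dots> = 0"
    using pbracket_ann_lift_V[OF va(1)] pbracket_alg_gen_plin_e[OF ann_lift_in_alg_gen]
    by (simp add: pbracket_mult_right)
  finally show "pbracket c (ann_lift \<xi>) (plin \<eta>) = 0" .
qed

lemma pdiff_ann_lift: "\<exists>r\<in>h. pdiff (ann_lift \<xi>) x = vscale (peval (plin e) x) \<xi> + r"
proof -
  let ?E = "plin e"
  let ?R = "pconst (-1) * (pconst (1/2) * quadratic_part \<xi>) + pconst (-1) * (?E * plin (ad_e_rep \<xi>))"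
  have lift: "ann_lift \<xi> = ?E * plin \<xi> + ?R"
    unfolding ann_lift_def by (simp add: pconst_uminus)
  have "?R \<in> Sym h"
    unfolding Sym_def quadratic_part_def
    using V_subset_h[OF ad_V_in_V] V_subset_h[OF dual_vec(1)] V_subset_h[OF ad_e_rep(1)] e_in_h basis_subset
    by (intro alg_gen.add alg_gen.mult alg_gen_sum alg_gen.const alg_gen.gen) auto
  then have "vscale (peval (plin \<xi>) x) e + pdiff ?R x \<in> h"
    using pdiff_Sym[OF h_subspace] e_in_h
    by (intro subspace_add[OF h_subspace] subspace_scale[OF h_subspace])
  moreover have "pdiff (ann_lift \<xi>) x = vscale (peval ?E x) \<xi> + (vscale (peval (plin \<xi>) x) e + pdiff ?R x)"
    unfolding lift pdiff_add pdiff_mult by (simp add: add.assoc)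
  ultimately show ?thesis
    by blast
qed

section \<open>Completeness at generic points\<close>

lemma Phi_V_V: "v \<in> V \<Longrightarrow> \<eta> \<in> V \<Longrightarrow> Phi c x v \<eta> = \<omega> v \<eta> * peval (plin e) x"
  by (simp add: Phi_def bracket_V peval_plin vscale_apply sum_distrib_left mult_ac)

lemma Phi_e_left [simp]: "Phi c x e y = 0"
  by (simp add: Phi_def e_central)

lemma Phi_e_right [simp]: "Phi c x y e = 0"
  by (simp add: Phi_def bracket_e_right)

lemma plin_e_Ann: "plin e \<in> Ann c h"
  unfolding Ann_def by (simp add: pbracket_plin e_central)

lemma central_if_Phi_orth_V:
  assumes r: "r \<in> h" and s: "peval (plin e) x \<noteq> 0" and orth: "\<And>\<eta>. \<eta> \<in> V \<Longrightarrow> Phi c x r \<eta> = 0"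
  obtains a where "r = vscale a e"
proof -
  obtain v a where va: "v \<in> V" "r = v + vscale a e"
    using r by (rule h_decomp)
  have "\<omega> v \<eta> = 0" if "\<eta> \<in> V" for \<eta>
  proof -
    have "Phi c x v \<eta> = Phi c x r \<eta>"
      unfolding va(2) by (simp add: Phi_add_left Phi_scale_left)
    then show ?thesis
      using orth[OF that] Phi_V_V[OF va(1) that] s by simp
  qed
  then have "v = 0"
    using nondegenerate[OF va(1)] by blast
  with va(2) show thesis
    by (intro that[of a]) simp
qed

text \<open>Where \<open>\<langle>x, e\<rangle> \<noteq> 0\<close>, the differential of \<open>ann_lift w\<close> is \<open>\<langle>x, e\<rangle> w\<close> modulo \<open>h\<close>,
  and orthogonality to \<open>h\<close> forces that \<open>h\<close>-part onto the line of \<open>e = d(plin e)\<close>.\<close>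

lemma in_dspan_Ann_if_Phi_orth_h:
  assumes s: "peval (plin e) x \<noteq> 0" and w: "\<And>\<eta>. \<eta> \<in> h \<Longrightarrow> Phi c x w \<eta> = 0"
  shows "w \<in> dspan (Ann c h) x"
proof -
  let ?s = "peval (plin e) x" and ?d = "pdiff (ann_lift w) x"
  obtain r where r: "r \<in> h" "?d = vscale ?s w + r"
    using pdiff_ann_lift by blast
  have d: "?d \<in> dspan (Ann c h) x"
    using pdiff_in_dspan[OF ann_lift_Ann] .
  have "Phi c x r \<eta> = 0" if "\<eta> \<in> V" for \<eta>
  proof -
    have "Phi c x r \<eta> = Phi c x ?d \<eta> - ?s * Phi c x w \<eta>"
      using r(2) by (simp add: Phi_add_left Phi_scale_left)
    then show ?thesis
      using Phi_dspan_Ann[OF d V_subset_h[OF that]] w[OF V_subset_h[OF that]] by simp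
  qed
  then obtain a where a: "r = vscale a e"
    using central_if_Phi_orth_V[OF r(1) s] by blast
  have e: "e \<in> dspan (Ann c h) x"
    using pdiff_in_dspan[OF plin_e_Ann, of x] by simp
  have "w = vscale (1 / ?s) (?d - vscale a e)"
    using r(2) a s by (simp add: fun_eq_iff vscale_apply)
  also have "\<dots> \<in> dspan (Ann c h) x"
    using d e by (intro subspace_scale[OF dspan_subspace] subspace_diff[OF dspan_subspace]
        subspace_scale[OF dspan_subspace])
  finally show ?thesis .
qed

lemma exists_V_Phi_orth_h:
  assumes s: "peval (plin e) x \<noteq> 0"
  obtains v where "v \<in> V" "\<And>\<eta>. \<eta> \<in> h \<Longrightarrow> Phi c x (u - v) \<eta> = 0"
proof -
  let ?s = "peval (plin e) x"
  obtain v where v: "v \<in> V" "\<And>\<eta>. \<eta> \<in> V \<Longrightarrow> \<omega> v \<eta> = Phi c x u \<eta> / ?s"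
    by (rule riesz_representation[of "\<lambda>\<eta>. Phi c x u \<eta> / ?s"])
       (simp_all add: Phi_add_right Phi_scale_right add_divide_distrib)
  have "Phi c x (u - v) \<eta> = 0" if "\<eta> \<in> h" for \<eta>
  proof -
    obtain \<eta>' a where \<eta>: "\<eta>' \<in> V" "\<eta> = \<eta>' + vscale a e"
      using \<open>\<eta> \<in> h\<close> by (rule h_decomp)
    have "Phi c x v \<eta>' = Phi c x u \<eta>'"
      using Phi_V_V[OF v(1) \<eta>(1)] v(2)[OF \<eta>(1)] s by simp
    then show ?thesis
      unfolding \<eta>(2) by (simp add: Phi_add_right Phi_scale_right Phi_diff_left)
  qed
  with v(1) show thesis
    by (rule that)
qed

lemma in_dspan_poisson_gen_if_Phi_orth:
  assumes A_Ann: "A \<subseteq> Ann c h" and B_Sym: "B \<subseteq> Sym h"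
    and max_A: "max_isotropic_in c x (dspan A x) (dspan (Ann c h) x)"
    and max_B: "max_isotropic_in c x (dspan B x) (dspan (Sym h) x)"
    and s: "peval (plin e) x \<noteq> 0"
    and orth: "\<And>y. y \<in> dspan (poisson_gen c (A \<union> B)) x \<Longrightarrow> Phi c x u y = 0"
  shows "u \<in> dspan (poisson_gen c (A \<union> B)) x"
proof -
  let ?P = "poisson_gen c (A \<union> B)"
  have dA: "dspan A x \<subseteq> dspan ?P x" and dB: "dspan B x \<subseteq> dspan ?P x"
    by (auto intro!: dspan_mono poisson_gen.gen)
  have dB_h: "dspan B x \<subseteq> h"
    using B_Sym pdiff_Sym[OF h_subspace] by (intro dspan_subset_if_pdiff_in[OF h_subspace]) auto
  obtain v where v: "v \<in> V" and w: "\<And>\<eta>. \<eta> \<in> h \<Longrightarrow> Phi c x (u - v) \<eta> = 0"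
    using exists_V_Phi_orth_h[OF s] by blast
  have "v \<in> dspan B x"
  proof (rule max_isotropic_absorb[OF lie max_B dspan_subspace])
    have "plin v \<in> Sym h"
      unfolding Sym_def using V_subset_h[OF v] by (blast intro: alg_gen.gen)
    then show "v \<in> dspan (Sym h) x"
      using pdiff_in_dspan[of "plin v" "Sym h" x] by simp
  next
    fix b assume "b \<in> dspan B x"
    then have "b \<in> dspan ?P x" "b \<in> h"
      using dB dB_h by auto
    then show "Phi c x v b = 0"
      using orth[of b] w[of b] by (simp add: Phi_diff_left)
  qed
  moreover have "u - v \<in> dspan A x"
  proof (rule max_isotropic_absorb[OF lie max_A dspan_subspace])
    show "u - v \<in> dspan (Ann c h) x"
      using in_dspan_Ann_if_Phi_orth_h[OF s w] .
  next
    fix a assume a: "a \<in> dspan A x"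
    then have "Phi c x a v = 0"
      using Phi_dspan_Ann dspan_mono[OF A_Ann] V_subset_h[OF v] by blast
    then show "Phi c x (u - v) a = 0"
      using orth[of a] a dA Phi_antisym[OF lie, of x a v] by (auto simp: Phi_diff_left)
  qed
  ultimately have "v + (u - v) \<in> dspan ?P x"
    using dA dB by (blast intro: subspace_add[OF dspan_subspace])
  then show ?thesis
    by simp
qed

lemma max_isotropic_dspan_poisson_gen:
  assumes commuting: "\<And>f g. f \<in> A \<union> B \<Longrightarrow> g \<in> A \<union> B \<Longrightarrow> pbracket c f g = 0"
    and "A \<subseteq> Ann c h" "B \<subseteq> Sym h"
    and "max_isotropic_in c x (dspan A x) (dspan (Ann c h) x)"
    and "max_isotropic_in c x (dspan B x) (dspan (Sym h) x)"
    and "peval (plin e) x \<noteq> 0"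
  shows "max_isotropic_in c x (dspan (poisson_gen c (A \<union> B)) x) (dspan UNIV x)"
proof (rule max_isotropic_in_if_absorbing[OF dspan_subspace])
  show "isotropic c x (dspan (poisson_gen c (A \<union> B)) x)"
    using commuting by (rule isotropic_dspan_poisson_gen)
  show "dspan (poisson_gen c (A \<union> B)) x \<subseteq> dspan UNIV x"
    by (rule dspan_mono) simp
qed (use in_dspan_poisson_gen_if_Phi_orth assms(2-) in blast)

end

lemma pbracket_eq_0_union:
  assumes lie: "is_lie_algebra c"
    and A_comm: "poisson_commutative c A" and A_Ann: "A \<subseteq> Ann c h"
    and B_comm: "poisson_commutative c B" and B_Sym: "B \<subseteq> Sym h"
    and f: "f \<in> A \<union> B" and g: "g \<in> A \<union> B"
  shows "pbracket c f g = 0"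
proof -
  have mixed: "pbracket c a b = 0" if "a \<in> A" "b \<in> B" for a b
    using pbracket_Ann_Sym A_Ann B_Sym that by blast
  consider "f \<in> A" "g \<in> A" | "f \<in> B" "g \<in> B" | "f \<in> A" "g \<in> B" | "f \<in> B" "g \<in> A"
    using f g by blast
  then show ?thesis
  proof cases
    case 4
    then show ?thesis
      using mixed[of g f] pbracket_antisym[of c g f, OF structure_constants_antisym[OF lie]] by simp
  qed (use A_comm B_comm mixed in \<open>auto simp: poisson_commutative_def\<close>)
qed

lemma heisenberg_ideal_exists:
  fixes c :: "'n::finite \<Rightarrow> 'n \<Rightarrow> 'n \<Rightarrow> 'k::field_char_0"
  assumes lie: "is_lie_algebra c" and ideal: "is_ideal c h" and heis: "is_heisenberg c h m"
    and cent: "center c UNIV = center c h"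
  obtains V \<omega> Bs e where "heisenberg_ideal V \<omega> Bs c h e"
proof -
  obtain V e \<omega> where H: "is_subspace V" "has_dim V (2 * m)" "e \<noteq> 0" "e \<notin> V"
      "h = {v + vscale a e | v a. v \<in> V}" "\<forall>\<xi>\<in>h. bracket c e \<xi> = 0 \<and> bracket c \<xi> e = 0"
      "symplectic_on V \<omega>" "\<forall>\<xi>1\<in>V. \<forall>\<xi>2\<in>V. bracket c \<xi>1 \<xi>2 = vscale (\<omega> \<xi>1 \<xi>2) e"
    using heis unfolding is_heisenberg_def by blast
  obtain Bs where Bs: "finite Bs" "lin_indep Bs" "kspan Bs = V"
    using H(2) unfolding has_dim_def by blast
  have "e = 0 + vscale 1 e"
    by simp
  then have "e \<in> h"
    unfolding H(5) using subspace_zero[OF H(1)] by blast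
  then have "e \<in> center c UNIV"
    using cent H(6) unfolding center_def by blast
  then have "\<And>y. bracket c e y = 0"
    unfolding center_def by blast
  then have "heisenberg_ideal V \<omega> Bs c h e"
    using H Bs ideal lie by unfold_locales (auto simp: is_ideal_def)
  then show thesis
    by (rule that)
qed

theorem proposition5:
  fixes c :: "'n::finite \<Rightarrow> 'n \<Rightarrow> 'n \<Rightarrow> 'k::field_char_0"
    and h :: "('n, 'k) vec set" and m :: nat
    and A B :: "('n, 'k) poly set"
  assumes lie: "is_lie_algebra c"
    and ideal: "is_ideal c h"
    and heis: "is_heisenberg c h m"
    and cent: "center c UNIV = center c h"
    and A_sub: "is_subalgebra A" and A_comm: "poisson_commutative c A"
    and A_Ann: "A \<subseteq> Ann c h" and A_compl: "complete_in c A (Ann c h)"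
    and B_sub: "is_subalgebra B" and B_comm: "poisson_commutative c B"
    and B_S: "B \<subseteq> Sym h" and B_compl: "complete_in c B (Sym h)"
  shows "complete_in c (poisson_gen c (A \<union> B)) UNIV"
proof -
  obtain V \<omega> Bs e where "heisenberg_ideal V \<omega> Bs c h e"
    using heisenberg_ideal_exists[OF lie ideal heis cent] .
  then interpret heisenberg_ideal V \<omega> Bs c h e .
  have "generically (\<lambda>x. (max_isotropic_in c x (dspan A x) (dspan (Ann c h) x) \<and>
      max_isotropic_in c x (dspan B x) (dspan (Sym h) x)) \<and> peval (plin e) x \<noteq> 0)"
    using A_compl B_compl generically_plin_neq_0[OF e_neq_0] unfolding complete_in_def
    by (intro generically_conj)
  then show ?thesis
    unfolding complete_in_def generically_def
    using max_isotropic_dspan_poisson_gen[OF pbracket_eq_0_union[OF lie A_comm A_Ann B_comm B_S] A_Ann B_S]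
    by meson
qed

end
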